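(* For every fixed environment $\omega=(\omega_x)_{x\in\mathbb Z}\in\mathbb R^{\mathbb Z}$ and all real $-\infty<u\le v<\infty$, $$\lim_{n\to\infty} P^{\omega}_n\!\left(u\le \frac{X_n}{n}\le v\right)=\int_u^v \{1-\sin(\omega_0)\,x\}\, f_K(x)\,dx,$$ where $$f_K(x)=\frac{1}{\pi(1-x^2)\sqrt{1-2x^2}}\,I_{(-1/\sqrt2,\,1/\sqrt2)}(x),$$ and $I_A$ denotes the indicator function of $A$.
   Context: Quantum walk in an environment $\omega=(\omega_x)_{x\in\mathbb Z}$, $\omega_x\in\mathbb R$. For $x\in\mathbb Z$ let $$U_x=\frac{1}{\sqrt2}\begin{pmatrix} e^{i\omega_x} & 1\\ 1 & -e^{-i\omega_x}\end{pmatrix}=\begin{pmatrix} a_x & b_x\\ c_x & d_x\end{pmatrix},\qquad P_x=\begin{pmatrix} a_x & b_x\\ 0&0\end{pmatrix},\quad Q_x=\begin{pmatrix} 0&0\\ c_x & d_x\end{pmatrix}.$$ For integers $l,m$ define $2\times2$ matrices $\Xi_n(l,m)$, $n=l+m$, by $\Xi_0(0,0)=I$, $\Xi_n(l,m)=0$ if $l<0$ or $m<0$, and for $l,m\ge0$ with $l+m=n+1\ge1$, writing $x=-l+m$, $$\Xi_{n+1}(l,m)=P_{x+1}\,\Xi_n(l-1,m)+Q_{x-1}\,\Xi_n(l,m-1).$$ (Equivalently, $\Xi_n(l,m)$ is the sum over all nearest-neighbour paths from $0$ with $l$ left steps and $m$ right steps of the ordered product, latest step leftmost, of $P_y$ for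 each left step from site $y$ and $Q_y$ for each right step from site $y$.) Let $\varphi_*={}^T[1/\sqrt2,\,i/\sqrt2]$. The quenched law of the position $X_n$ at time $n$ is $P^{\omega}_n(X_n=x)=\|\Xi_n(l,m)\varphi_*\|^2$ for $x=-l+m$, $n=l+m$, $l,m\ge0$ (and $0$ for other $x$); this is a probability distribution on $\mathbb Z$. *)

theory Defs
  imports "HOL-Analysis.Analysis"
begin

text \<open>2x2 complex matrices are rendered as complex^2^2 (rows/columns indexed by 1, 2).\<close>

definition mat2 :: "complex \<Rightarrow> complex \<Rightarrow> complex \<Rightarrow> complex \<Rightarrow> complex^2^2" where
  "mat2 a b c d = (\<chi> i j. if i = 1 then (if j = 1 then a else b) else (if j = 1 then c else d))"

definition qw_a :: "(int \<Rightarrow> real) \<Rightarrow> int \<Rightarrow> complex" where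
  "qw_a \<omega> x = cis (\<omega> x) / complex_of_real (sqrt 2)"
definition qw_b :: "(int \<Rightarrow> real) \<Rightarrow> int \<Rightarrow> complex" where
  "qw_b \<omega> x = 1 / complex_of_real (sqrt 2)"
definition qw_c :: "(int \<Rightarrow> real) \<Rightarrow> int \<Rightarrow> complex" where
  "qw_c \<omega> x = 1 / complex_of_real (sqrt 2)"
definition qw_d :: "(int \<Rightarrow> real) \<Rightarrow> int \<Rightarrow> complex" where
  "qw_d \<omega> x = - cis (- \<omega> x) / complex_of_real (sqrt 2)"

definition qw_U :: "(int \<Rightarrow> real) \<Rightarrow> int \<Rightarrow> complex^2^2" where
  "qw_U \<omega> x = mat2 (qw_a \<omega> x) (qw_b \<omega> x) (qw_c \<omega> x) (qw_d \<omega> x)"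
definition qw_P :: "(int \<Rightarrow> real) \<Rightarrow> int \<Rightarrow> complex^2^2" where
  "qw_P \<omega> x = mat2 (qw_a \<omega> x) (qw_b \<omega> x) 0 0"
definition qw_Q :: "(int \<Rightarrow> real) \<Rightarrow> int \<Rightarrow> complex^2^2" where
  "qw_Q \<omega> x = mat2 0 0 (qw_c \<omega> x) (qw_d \<omega> x)"

text \<open>Xi \<omega> l m = \<Xi>_{l+m}(l,m); position x = -l+m.  Terms with a negative index vanish.\<close>
fun Xi :: "(int \<Rightarrow> real) \<Rightarrow> nat \<Rightarrow> nat \<Rightarrow> complex^2^2" where
  "Xi \<omega> 0 0 = mat 1"
| "Xi \<omega> (Suc l) 0 = qw_P \<omega> (- int (Suc l) + 1) ** Xi \<omega> l 0"
| "Xi \<omega> 0 (Suc m) = qw_Q \<omega> (int (Suc m) - 1) ** Xi \<omega> 0 m"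
| "Xi \<omega> (Suc l) (Suc m) =
     qw_P \<omega> (- int (Suc l) + int (Suc m) + 1) ** Xi \<omega> l (Suc m)
   + qw_Q \<omega> (- int (Suc l) + int (Suc m) - 1) ** Xi \<omega> (Suc l) m"

definition phi_star :: "complex^2" where
  "phi_star = (\<chi> i. if i = 1 then 1 / complex_of_real (sqrt 2) else \<i> / complex_of_real (sqrt 2))"

definition qw_prob :: "(int \<Rightarrow> real) \<Rightarrow> nat \<Rightarrow> int \<Rightarrow> real" where
  "qw_prob \<omega> n x =
     (if \<bar>x\<bar> \<le> int n \<and> even (int n + x)
      then (norm (Xi \<omega> (nat ((int n - x) div 2)) (nat ((int n + x) div 2)) *v phi_star))\<^sup>2
      else 0)"

definition qw_interval_prob :: "(int \<Rightarrow> real) \<Rightarrow> nat \<Rightarrow> real \<Rightarrow> real \<Rightarrow> real" where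
  "qw_interval_prob \<omega> n u v =
     (\<Sum>x\<in>{x\<in>{- int n..int n}. u \<le> real_of_int x / real n \<and> real_of_int x / real n \<le> v}. qw_prob \<omega> n x)"

definition f_K :: "real \<Rightarrow> real" where
  "f_K x = indicator {-1/sqrt 2<..<1/sqrt 2} x / (pi * (1 - x\<^sup>2) * sqrt (1 - 2 * x\<^sup>2))"

end

theory Submission
  imports Defs "HOL-Probability.Probability"
begin

(* (1) Gauge transformation.  With the position-dependent phases
       exp(\<i> (S(x) \<plusminus> \<omega>_x/2)), S(x+1) - S(x) = (\<omega>_x + \<omega>_{x+1})/2, the amplitudes of
       the walk become those of the homogeneous Hadamard walk started from a
       state (\<alpha>, \<beta>) depending only on \<omega>_0.  Hence the law of X_n only depends on \<omega>_0.
   (2) Fourier analysis of the Hadamard walk.  The Fourier transform of the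
       amplitudes evolves by a unitary 2x2 matrix U(k) with eigenvalues
       \<lambda>\<^sub>+(k) = e^{\<i>\<theta>(k)}, \<lambda>\<^sub>-(k) = -e^{-\<i>\<theta>(k)}, \<theta>(k) = -arcsin(sin k/\<surd>2).
   (3) By Parseval, the characteristic function of X_n/n is (1/2\<pi>) times the
       integral over [0,2\<pi>] of an explicit integrand; it converges uniformly in k,
       because n(\<theta>(k+t/n) - \<theta>(k)) \<rightarrow> t \<theta>'(k).
   (4) The limit is the characteristic function of \<theta>'(k) under the density
       (1 - sin \<omega>_0 \<theta>'(k))/\<pi> on [0,\<pi>]; substituting x = \<theta>'(k) shows that this is
       the measure with density (1 - sin(\<omega>_0) x) f_K(x).
   (5) Levy's continuity theorem gives weak convergence; the limit has no atoms,
       so the probabilities of closed intervals converge. *)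

subsection \<open>Amplitudes of the walk as a function of time and position\<close>

definition amp :: "(int \<Rightarrow> real) \<Rightarrow> nat \<Rightarrow> int \<Rightarrow> complex^2" where
  "amp \<omega> n x = (if \<bar>x\<bar> \<le> int n \<and> even (int n + x)
     then Xi \<omega> (nat ((int n - x) div 2)) (nat ((int n + x) div 2)) *v phi_star else 0)"

lemma amp_Xi: "n = l + m \<Longrightarrow> amp \<omega> n (int m - int l) = Xi \<omega> l m *v phi_star"
proof -
  assume n: "n = l + m"
  have "even (int n + (int m - int l))" using n by (simp add: algebra_simps)
  moreover have "nat ((int n - (int m - int l)) div 2) = l" "nat ((int n + (int m - int l)) div 2) = m"
    using n by simp_all
  ultimately show ?thesis unfolding amp_def using n by auto
qed

lemma amp_unreachable: "\<bar>x\<bar> > int n \<or> odd (int n + x) \<Longrightarrow> amp \<omega> n x = 0"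
  unfolding amp_def by auto

lemma reachable_position:
  assumes "\<bar>x\<bar> \<le> int n" and "even (int n + x)"
  obtains l m where "n = l + m" and "x = int m - int l"
proof -
  obtain q where q: "int n + x = 2 * q" using assms(2) by (meson evenE)
  show ?thesis
  proof (rule that[of "nat (int n - q)" "nat q"])
    show "n = nat (int n - q) + nat q" "x = int (nat q) - int (nat (int n - q))"
      using q assms(1) by linarith+
  qed
qed

lemma amp_step_reachable:
  assumes lm: "Suc n = l + m"
  defines "x \<equiv> int m - int l"
  shows "amp \<omega> (Suc n) x = qw_P \<omega> (x+1) *v amp \<omega> n (x+1) + qw_Q \<omega> (x-1) *v amp \<omega> n (x-1)"
proof (cases l)
  case 0
  then have x: "x = int n + 1" and m: "m = Suc n" using lm by (simp_all add: x_def)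
  have "amp \<omega> n (x+1) = 0" using x by (intro amp_unreachable) simp
  moreover have "amp \<omega> n (x-1) = Xi \<omega> 0 n *v phi_star" using amp_Xi[of n 0 n \<omega>] x by simp
  moreover have "amp \<omega> (Suc n) x = Xi \<omega> 0 (Suc n) *v phi_star"
    using amp_Xi[of "Suc n" 0 "Suc n" \<omega>] x by (simp add: add.commute)
  ultimately show ?thesis using x by (simp add: matrix_vector_mul_assoc)
next
  case (Suc l')
  show ?thesis
  proof (cases m)
    case 0
    then have x: "x = - 1 - int n" and l: "l = Suc n" using lm by (simp_all add: x_def)
    have "amp \<omega> n (x-1) = 0" using x by (intro amp_unreachable) simp
    moreover have "amp \<omega> n (x+1) = Xi \<omega> n 0 *v phi_star" using amp_Xi[of n n 0 \<omega>] x by simp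
    moreover have "amp \<omega> (Suc n) x = Xi \<omega> (Suc n) 0 *v phi_star"
      using amp_Xi[of "Suc n" "Suc n" 0 \<omega>] x by (simp add: add.commute)
    ultimately show ?thesis using x by (simp add: matrix_vector_mul_assoc)
  next
    case (Suc m')
    have n: "n = l' + Suc m'" "n = Suc l' + m'" using lm \<open>l = Suc l'\<close> Suc by simp_all
    have x1: "x + 1 = int (Suc m') - int l'" "x - 1 = int m' - int (Suc l')"
      using \<open>l = Suc l'\<close> Suc by (simp_all add: x_def)
    have "amp \<omega> n (x+1) = Xi \<omega> l' (Suc m') *v phi_star" "amp \<omega> n (x-1) = Xi \<omega> (Suc l') m' *v phi_star"
      unfolding x1 by (rule amp_Xi[OF n(1)], rule amp_Xi[OF n(2)])
    moreover have "- int (Suc l') + int (Suc m') + 1 = x + 1" "- int (Suc l') + int (Suc m') - 1 = x - 1"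
      using \<open>l = Suc l'\<close> Suc by (simp_all add: x_def)
    ultimately show ?thesis
      using amp_Xi[OF lm] \<open>l = Suc l'\<close> Suc
      by (simp only: x_def Xi.simps matrix_vector_mul_assoc matrix_vector_mult_add_rdistrib)
  qed
qed

lemma amp_step:
  "amp \<omega> (Suc n) x = qw_P \<omega> (x+1) *v amp \<omega> n (x+1) + qw_Q \<omega> (x-1) *v amp \<omega> n (x-1)"
proof (cases "\<bar>x\<bar> \<le> int (Suc n) \<and> even (int (Suc n) + x)")
  case True
  then obtain l m where "Suc n = l + m" "x = int m - int l" by (meson reachable_position)
  then show ?thesis using amp_step_reachable by blast
next
  case False
  then have "amp \<omega> (Suc n) x = 0" "amp \<omega> n (x+1) = 0" "amp \<omega> n (x-1) = 0"
    by (auto intro!: amp_unreachable)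
  then show ?thesis by simp
qed

lemma mat2_mult_1: "(mat2 a b c d *v v) $ 1 = a * v $ 1 + b * v $ 2"
  and mat2_mult_2: "(mat2 a b c d *v v) $ 2 = c * v $ 1 + d * v $ 2"
  by (simp_all add: mat2_def matrix_vector_mult_def sum_2)

lemma norm_vec2_sq: "(norm (v::complex^2))\<^sup>2 = (cmod (v$1))\<^sup>2 + (cmod (v$2))\<^sup>2"
  by (simp add: norm_vec_def L2_set_def sum_2 add_nonneg_nonneg)

lemma amp_step_1:
  "amp \<omega> (Suc n) x $ 1 = qw_a \<omega> (x+1) * amp \<omega> n (x+1) $ 1 + qw_b \<omega> (x+1) * amp \<omega> n (x+1) $ 2"
  and amp_step_2:
  "amp \<omega> (Suc n) x $ 2 = qw_c \<omega> (x-1) * amp \<omega> n (x-1) $ 1 + qw_d \<omega> (x-1) * amp \<omega> n (x-1) $ 2"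
  by (simp_all add: amp_step qw_P_def qw_Q_def mat2_mult_1 mat2_mult_2)

lemma amp_0: "amp \<omega> 0 x = (if x = 0 then phi_star else 0)"
  unfolding amp_def by auto

subsection \<open>Gauge transformation to the Hadamard walk\<close>

definition bond_phase :: "(int \<Rightarrow> real) \<Rightarrow> int \<Rightarrow> real" where
  "bond_phase \<omega> x = (\<omega> x + \<omega> (x+1)) / 2"
definition gauge_phase :: "(int \<Rightarrow> real) \<Rightarrow> int \<Rightarrow> real" where
  "gauge_phase \<omega> x =
     (if 0 \<le> x then (\<Sum>k\<in>{0..<x}. bond_phase \<omega> k) else - (\<Sum>k\<in>{x..<0}. bond_phase \<omega> k))"

lemma gauge_phase_step: "gauge_phase \<omega> (x+1) = gauge_phase \<omega> x + bond_phase \<omega> x"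
proof (cases "0 \<le> x")
  case True
  then have "{0..<x+1} = insert x {0..<x}" by auto
  then show ?thesis using True unfolding gauge_phase_def by simp
next
  case False
  show ?thesis
  proof (cases "x = -1")
    case True
    have "{-1..<0::int} = {-1}" by auto
    then show ?thesis using True unfolding gauge_phase_def by simp
  next
    case False2: False
    then have "{x..<0} = insert x {x+1..<0}" using False by auto
    then show ?thesis using False False2 unfolding gauge_phase_def by simp
  qed
qed

lemma gauge_phase_0[simp]: "gauge_phase \<omega> 0 = 0" by (simp add: gauge_phase_def)

text \<open>Amplitudes of the Hadamard walk (coin \<open>H = [[1,1],[1,-1]]/\<surd>2\<close>) started from the
  coin state \<open>(\<alpha>, \<beta>)\<close> at the origin; the first component moves left, the second right.\<close>
fun hadamard :: "complex \<Rightarrow> complex \<Rightarrow> nat \<Rightarrow> int \<Rightarrow> complex \<times> complex" where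
  "hadamard al be 0 x = (if x = 0 then (al, be) else (0, 0))"
| "hadamard al be (Suc n) x =
    ((fst (hadamard al be n (x+1)) + snd (hadamard al be n (x+1))) / complex_of_real (sqrt 2),
     (fst (hadamard al be n (x-1)) - snd (hadamard al be n (x-1))) / complex_of_real (sqrt 2))"

definition alpha0 :: "(int \<Rightarrow> real) \<Rightarrow> complex" where
  "alpha0 \<omega> = cis (\<omega> 0 / 2) / complex_of_real (sqrt 2)"
definition beta0 :: "(int \<Rightarrow> real) \<Rightarrow> complex" where
  "beta0 \<omega> = \<i> * cis (- \<omega> 0 / 2) / complex_of_real (sqrt 2)"

lemma gauge:
  "hadamard (alpha0 \<omega>) (beta0 \<omega>) n x =
     (cis (gauge_phase \<omega> x + \<omega> x / 2) * amp \<omega> n x $ 1,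
      cis (gauge_phase \<omega> x - \<omega> x / 2) * amp \<omega> n x $ 2)"
proof (induction n arbitrary: x)
  case 0
  then show ?case by (simp add: amp_0 alpha0_def beta0_def phi_star_def)
next
  case (Suc n)
  let ?S = "gauge_phase \<omega>"
  have s1: "?S (x+1) = ?S x + (\<omega> x + \<omega> (x+1)) / 2"
    using gauge_phase_step[of \<omega> x] by (simp add: bond_phase_def)
  have s2: "?S x = ?S (x-1) + (\<omega> (x-1) + \<omega> x) / 2"
    using gauge_phase_step[of \<omega> "x-1"] by (simp add: bond_phase_def)
  have c1: "cis (?S (x+1) + \<omega> (x+1) / 2) = cis (?S x + \<omega> x / 2) * cis (\<omega> (x+1))"
    unfolding s1 cis_mult by (rule arg_cong[where f=cis]) (simp add: field_simps)
  have c2: "cis (?S (x+1) - \<omega> (x+1) / 2) = cis (?S x + \<omega> x / 2)"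
    unfolding s1 by (rule arg_cong[where f=cis]) (simp add: field_simps)
  have c3: "cis (?S (x-1) + \<omega> (x-1) / 2) = cis (?S x - \<omega> x / 2)"
    unfolding s2 by (rule arg_cong[where f=cis]) (simp add: field_simps)
  have c4: "cis (?S (x-1) - \<omega> (x-1) / 2) = cis (?S x - \<omega> x / 2) * cis (- \<omega> (x-1))"
    unfolding s2 cis_mult by (rule arg_cong[where f=cis]) (simp add: field_simps)
  show ?case
    unfolding hadamard.simps Suc.IH amp_step_1 amp_step_2 fst_conv snd_conv c1 c2 c3 c4
    by (simp add: qw_a_def qw_b_def qw_c_def qw_d_def algebra_simps add_divide_distrib diff_divide_distrib)
qed

lemma qw_prob_hadamard:
  "qw_prob \<omega> n x = (cmod (fst (hadamard (alpha0 \<omega>) (beta0 \<omega>) n x)))\<^sup>2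
                    + (cmod (snd (hadamard (alpha0 \<omega>) (beta0 \<omega>) n x)))\<^sup>2"
proof -
  have "qw_prob \<omega> n x = (norm (amp \<omega> n x))\<^sup>2" unfolding qw_prob_def amp_def by auto
  then show ?thesis unfolding gauge by (simp add: norm_mult norm_vec2_sq)
qed

lemma hadamard_outside: "int n < \<bar>x\<bar> \<Longrightarrow> hadamard al be n x = (0, 0)"
proof (induction n arbitrary: x)
  case 0 then show ?case by simp
next
  case (Suc n)
  have "int n < \<bar>x+1\<bar>" "int n < \<bar>x-1\<bar>" using Suc.prems by auto
  then show ?case using Suc.IH by simp
qed

subsection \<open>Fourier analysis of the Hadamard walk\<close>

definition fourier :: "(int \<Rightarrow> complex) \<Rightarrow> int \<Rightarrow> real \<Rightarrow> complex" where
  "fourier f N k = (\<Sum>x\<in>{-N..N}. f x * iexp (k * of_int x))"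

lemma iexp_add: "iexp (a + b) = iexp a * iexp b"
  by (simp add: distrib_left exp_add)

lemma iexp_shift1: "iexp (k * of_int (y - 1)) = iexp (-k) * iexp (k * of_int y)"
  unfolding iexp_add[symmetric] by (rule arg_cong[where f=iexp]) (simp add: algebra_simps)
lemma iexp_shift2: "iexp (k * of_int (y + 1)) = iexp k * iexp (k * of_int y)"
  unfolding iexp_add[symmetric] by (rule arg_cong[where f=iexp]) (simp add: algebra_simps)

lemma fourier_shift_plus:
  assumes N: "0 \<le> N" and z: "\<And>y. N < \<bar>y\<bar> \<Longrightarrow> g y = 0"
  shows "(\<Sum>x\<in>{-(N+1)..N+1}. g (x+1) * iexp (k * of_int x)) = iexp (-k) * fourier g N k"
proof -
  have "(\<Sum>x\<in>{-(N+1)..N+1}. g (x+1) * iexp (k * of_int x)) = (\<Sum>y\<in>{-N..N+2}. g y * iexp (k * of_int (y - 1)))"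
    by (rule sum.reindex_bij_witness[of _ "\<lambda>y. y - 1" "\<lambda>x. x + 1"]) auto
  also have "\<dots> = (\<Sum>y\<in>{-N..N}. g y * iexp (k * of_int (y - 1)))"
    by (rule sum.mono_neutral_right) (use z N in auto)
  also have "\<dots> = iexp (-k) * fourier g N k"
    unfolding fourier_def sum_distrib_left
    by (rule sum.cong) (simp_all only: iexp_shift1 mult_ac)
  finally show ?thesis .
qed

lemma fourier_shift_minus:
  assumes N: "0 \<le> N" and z: "\<And>y. N < \<bar>y\<bar> \<Longrightarrow> g y = 0"
  shows "(\<Sum>x\<in>{-(N+1)..N+1}. g (x-1) * iexp (k * of_int x)) = iexp k * fourier g N k"
proof -
  have "(\<Sum>x\<in>{-(N+1)..N+1}. g (x-1) * iexp (k * of_int x)) = (\<Sum>y\<in>{-N-2..N}. g y * iexp (k * of_int (y + 1)))"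
    by (rule sum.reindex_bij_witness[of _ "\<lambda>y. y + 1" "\<lambda>x. x - 1"]) auto
  also have "\<dots> = (\<Sum>y\<in>{-N..N}. g y * iexp (k * of_int (y + 1)))"
    by (rule sum.mono_neutral_right) (use z N in auto)
  also have "\<dots> = iexp k * fourier g N k"
    unfolding fourier_def sum_distrib_left
    by (rule sum.cong) (simp_all only: iexp_shift2 mult_ac)
  finally show ?thesis .
qed

definition hatA :: "complex \<Rightarrow> complex \<Rightarrow> nat \<Rightarrow> real \<Rightarrow> complex" where
  "hatA al be n = fourier (\<lambda>x. fst (hadamard al be n x)) (int n)"
definition hatB :: "complex \<Rightarrow> complex \<Rightarrow> nat \<Rightarrow> real \<Rightarrow> complex" where
  "hatB al be n = fourier (\<lambda>x. snd (hadamard al be n x)) (int n)"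

lemma hatA_0: "hatA al be 0 k = al" and hatB_0: "hatB al be 0 k = be"
  by (simp_all add: hatA_def hatB_def fourier_def)

text \<open>In Fourier space one step of the walk is multiplication by the unitary matrix
  \<open>U(k) = [[e^{-\<i>k}, e^{-\<i>k}], [e^{\<i>k}, -e^{\<i>k}]]/\<surd>2\<close>.\<close>
lemma hatA_Suc: "hatA al be (Suc n) k = iexp (-k) * (hatA al be n k + hatB al be n k) / complex_of_real (sqrt 2)"
proof -
  have "hatA al be (Suc n) k = (\<Sum>x\<in>{-(int n+1)..int n+1}. (\<lambda>y. (fst (hadamard al be n y) + snd (hadamard al be n y)) / complex_of_real (sqrt 2)) (x+1) * iexp (k * of_int x))"
    unfolding hatA_def fourier_def hadamard.simps fst_conv of_nat_Suc by (simp only: add.commute)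
  also have "\<dots> = iexp (-k) * fourier (\<lambda>y. (fst (hadamard al be n y) + snd (hadamard al be n y)) / complex_of_real (sqrt 2)) (int n) k"
    by (rule fourier_shift_plus) (auto simp: hadamard_outside)
  also have "\<dots> = iexp (-k) * (hatA al be n k + hatB al be n k) / complex_of_real (sqrt 2)"
    by (simp add: hatA_def hatB_def fourier_def sum_divide_distrib[symmetric] sum.distrib distrib_right)
  finally show ?thesis .
qed

lemma hatB_Suc: "hatB al be (Suc n) k = iexp k * (hatA al be n k - hatB al be n k) / complex_of_real (sqrt 2)"
proof -
  have "hatB al be (Suc n) k = (\<Sum>x\<in>{-(int n+1)..int n+1}. (\<lambda>y. (fst (hadamard al be n y) - snd (hadamard al be n y)) / complex_of_real (sqrt 2)) (x-1) * iexp (k * of_int x))"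
    unfolding hatB_def fourier_def hadamard.simps snd_conv of_nat_Suc by (simp only: add.commute)
  also have "\<dots> = iexp k * fourier (\<lambda>y. (fst (hadamard al be n y) - snd (hadamard al be n y)) / complex_of_real (sqrt 2)) (int n) k"
    by (rule fourier_shift_minus) (auto simp: hadamard_outside)
  also have "\<dots> = iexp k * (hatA al be n k - hatB al be n k) / complex_of_real (sqrt 2)"
    by (simp add: hatA_def hatB_def fourier_def sum_divide_distrib[symmetric] sum_subtractf left_diff_distrib)
  finally show ?thesis .
qed

lemma iexp_cis: "iexp x = cis x" by (simp add: cis_conv_exp)

lemma iexp_deriv: "((\<lambda>k. iexp (k * m)) has_vector_derivative (m *\<^sub>R (\<i> * iexp (k*m)))) (at k within S)"
proof -
  have "((\<lambda>k::real. k * m) has_vector_derivative m) (at k within S)"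
    using has_real_derivative_iff_has_vector_derivative DERIV_cmult_right[of "\<lambda>x. x" 1 k S m, simplified] by auto
  from vector_diff_chain_within[OF this has_vector_derivative_iexp]
  show ?thesis by (simp add: o_def)
qed

lemma has_integral_iexp_int:
  "((\<lambda>k. iexp (k * of_int m)) has_integral (if m = 0 then 2*pi else 0)) {0..2*pi}"
proof (cases "m = 0")
  case True
  then show ?thesis using has_integral_const_real[of "1::complex" 0 "2*pi"] by (simp add: scaleR_conv_of_real)
next
  case False
  let ?f = "\<lambda>k. iexp (k * of_int m) / (\<i> * of_int m)"
  have d: "(?f has_vector_derivative iexp (k * of_int m)) (at k within {0..2*pi})" for k
    using has_vector_derivative_divide[OF iexp_deriv[of "of_int m" k "{0..2*pi}"], of "\<i> * of_int m"] False
    by (simp add: scaleR_conv_of_real)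
  have "((\<lambda>k. iexp (k * of_int m)) has_integral (?f (2*pi) - ?f 0)) {0..2*pi}"
    by (rule fundamental_theorem_of_calculus) (use d in auto)
  moreover have "iexp (2 * pi * of_int m) = 1"
    unfolding iexp_cis by (rule cis_multiple_2pi) simp
  ultimately show ?thesis using False by (simp add: mult_ac)
qed

text \<open>Parseval identity with a frequency shift \<open>s\<close>: it expresses the Fourier-Stieltjes
  transform of the weights \<open>cnj (f x) g x\<close> as an integral over the circle.\<close>
lemma parseval:
  "((\<lambda>k. cnj (fourier f N k) * fourier g N (k + s)) has_integral
      (2 * pi * (\<Sum>x\<in>{-N..N}. cnj (f x) * g x * iexp (s * of_int x)))) {0..2*pi}"
proof -
  have e: "cnj (fourier f N k) * fourier g N (k + s) =
     (\<Sum>x\<in>{-N..N}. \<Sum>y\<in>{-N..N}. (cnj (f x) * g y * iexp (s * of_int y)) * iexp (k * of_int (y - x)))" for k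
  proof -
    have c: "cnj (fourier f N k) = (\<Sum>x\<in>{-N..N}. cnj (f x) * iexp (- (k * of_int x)))"
      unfolding fourier_def by (simp add: exp_cnj)
    have h: "iexp (- (k * of_int x)) * iexp ((k + s) * of_int y) = iexp (s * of_int y) * iexp (k * of_int (y - x))" for x y
      unfolding iexp_add[symmetric] by (rule arg_cong[where f=iexp]) (simp add: algebra_simps)
    have t: "(cnj (f x) * iexp (- (k * of_int x))) * (g y * iexp ((k + s) * of_int y)) =
        (cnj (f x) * g y * iexp (s * of_int y)) * iexp (k * of_int (y - x))" for x y
    proof -
      have "(cnj (f x) * iexp (- (k * of_int x))) * (g y * iexp ((k + s) * of_int y)) =
        (cnj (f x) * g y) * (iexp (- (k * of_int x)) * iexp ((k + s) * of_int y))" by (simp only: mult_ac)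
      also have "\<dots> = (cnj (f x) * g y) * (iexp (s * of_int y) * iexp (k * of_int (y - x)))" by (simp only: h)
      finally show ?thesis by (simp only: mult_ac)
    qed
    show ?thesis unfolding c unfolding fourier_def sum_product t ..
  qed
  have "((\<lambda>k. \<Sum>x\<in>{-N..N}. \<Sum>y\<in>{-N..N}. (cnj (f x) * g y * iexp (s * of_int y)) * iexp (k * of_int (y - x))) has_integral
      (\<Sum>x\<in>{-N..N}. \<Sum>y\<in>{-N..N}. (cnj (f x) * g y * iexp (s * of_int y)) * (if y - x = 0 then 2*pi else 0))) {0..2*pi}"
    by (intro has_integral_sum finite_atLeastAtMost_int has_integral_mult_right has_integral_iexp_int)
  moreover have "(\<Sum>x\<in>{-N..N}. \<Sum>y\<in>{-N..N}. (cnj (f x) * g y * iexp (s * of_int y)) * (if y - x = 0 then 2*pi else 0))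
      = 2 * pi * (\<Sum>x\<in>{-N..N}. cnj (f x) * g x * iexp (s * of_int x))"
    by (simp add: sum_distrib_left if_distrib mult_ac cong: if_cong)
  ultimately show ?thesis unfolding e by simp
qed

text \<open>Eigenvectors of a matrix \<open>[[E, E], [F, -F]]/q\<close> with eigenvalues \<open>lp, lm\<close>: the
  two vectors obtained from \<open>(al, be)\<close> by the spectral projections, in purely algebraic form.\<close>
lemma eigen_identities:
  fixes E F q lp lm al be D :: complex
  assumes h: "E*F = 1" "q*q = 2" "q*(lp + lm) = E - F" "lp*lm = -1" "D = lp - lm" "D \<noteq> 0" "q\<noteq>0"
  shows "E*((E*(al+be)/q - lm*al)/D + (F*(al-be)/q - lm*be)/D)/q = lp*((E*(al+be)/q - lm*al)/D)"
    "F*((E*(al+be)/q - lm*al)/D - (F*(al-be)/q - lm*be)/D)/q = lp*((F*(al-be)/q - lm*be)/D)"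
    "E*((lp*al - E*(al+be)/q)/D + (lp*be - F*(al-be)/q)/D)/q = lm*((lp*al - E*(al+be)/q)/D)"
    "F*((lp*al - E*(al+be)/q)/D - (lp*be - F*(al-be)/q)/D)/q = lm*((lp*be - F*(al-be)/q)/D)"
  using h by (simp_all add: field_simps; algebra)+

subsection \<open>Spectral decomposition of the Fourier-space step\<close>

text \<open>The eigenvalues of \<open>U(k)\<close> are \<open>\<lambda>\<^sub>+ = e^{\<i>\<theta>(k)}\<close> and \<open>\<lambda>\<^sub>- = -e^{-\<i>\<theta>(k)}\<close>, where
  \<open>sin \<theta>(k) = -sin k/\<surd>2\<close>; the derivative \<open>vel = \<theta>'\<close> is the group velocity.\<close>
definition theta :: "real \<Rightarrow> real" where "theta k = - arcsin (sin k / sqrt 2)"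
definition vel :: "real \<Rightarrow> real" where "vel k = - cos k / sqrt (1 + (cos k)\<^sup>2)"
definition lam_p :: "real \<Rightarrow> complex" where "lam_p k = iexp (theta k)"
definition lam_m :: "real \<Rightarrow> complex" where "lam_m k = - iexp (- theta k)"
definition lam_gap :: "real \<Rightarrow> complex" where "lam_gap k = lam_p k - lam_m k"

text \<open>The components of \<open>U(k) (al, be)\<close>, and the projections of \<open>(al, be)\<close> onto the
  eigenlines of \<open>\<lambda>\<^sub>+\<close> (\<open>eigP\<close>) and \<open>\<lambda>\<^sub>-\<close> (\<open>eigQ\<close>), given by \<open>(U - \<lambda>\<^sub>\<mp>)/(\<lambda>\<^sub>\<plusminus> - \<lambda>\<^sub>\<mp>)\<close>.\<close>
definition step1 :: "complex \<Rightarrow> complex \<Rightarrow> real \<Rightarrow> complex" where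
  "step1 al be k = iexp (-k) * (al + be) / complex_of_real (sqrt 2)"
definition step2 :: "complex \<Rightarrow> complex \<Rightarrow> real \<Rightarrow> complex" where
  "step2 al be k = iexp k * (al - be) / complex_of_real (sqrt 2)"
definition eigP1 :: "complex \<Rightarrow> complex \<Rightarrow> real \<Rightarrow> complex" where
  "eigP1 al be k = (step1 al be k - lam_m k * al) / lam_gap k"
definition eigP2 :: "complex \<Rightarrow> complex \<Rightarrow> real \<Rightarrow> complex" where
  "eigP2 al be k = (step2 al be k - lam_m k * be) / lam_gap k"
definition eigQ1 :: "complex \<Rightarrow> complex \<Rightarrow> real \<Rightarrow> complex" where
  "eigQ1 al be k = (lam_p k * al - step1 al be k) / lam_gap k"
definition eigQ2 :: "complex \<Rightarrow> complex \<Rightarrow> real \<Rightarrow> complex" where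
  "eigQ2 al be k = (lam_p k * be - step2 al be k) / lam_gap k"

lemma sin_k_bound: "\<bar>sin k / sqrt 2\<bar> < 1"
proof -
  have "\<bar>sin k\<bar> \<le> 1" by simp
  moreover have "1 < sqrt (2::real)" by simp
  ultimately have "\<bar>sin k\<bar> < sqrt 2" by linarith
  then show ?thesis by (simp add: abs_div divide_less_eq)
qed

lemma sin_theta: "sin (theta k) = - sin k / sqrt 2"
  and cos_theta: "cos (theta k) = sqrt (1 - (sin k / sqrt 2)\<^sup>2)"
proof -
  have "-1 \<le> sin k / sqrt 2" "sin k / sqrt 2 \<le> 1" using sin_k_bound[of k] by linarith+
  then show "sin (theta k) = - sin k / sqrt 2" "cos (theta k) = sqrt (1 - (sin k / sqrt 2)\<^sup>2)"
    by (simp_all add: theta_def sin_arcsin cos_arcsin)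
qed

lemma cos_theta_pos: "cos (theta k) > 0"
proof -
  have "(sin k / sqrt 2)\<^sup>2 < 1" using sin_k_bound[of k] by (simp only: abs_square_less_1)
  then show ?thesis unfolding cos_theta by simp
qed

lemma Re_iexp[simp]: "Re (iexp x) = cos x" and Im_iexp[simp]: "Im (iexp x) = sin x"
  by (simp_all add: Re_exp Im_exp)
lemma Re_iexp_minus[simp]: "Re (exp (- (\<i> * complex_of_real x))) = cos x"
  and Im_iexp_minus[simp]: "Im (exp (- (\<i> * complex_of_real x))) = - sin x"
  by (simp_all add: Re_exp Im_exp)

lemma lam_gap_eq: "lam_gap k = complex_of_real (2 * cos (theta k))"
  by (simp add: lam_gap_def lam_p_def lam_m_def complex_eq_iff)

lemma lam_gap_nz: "lam_gap k \<noteq> 0"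
  using cos_theta_pos[of k] by (simp add: lam_gap_eq)

text \<open>Trace and determinant of \<open>U(k)\<close>, in the form used by \<open>eigen_identities\<close>.\<close>
lemma lam_p_lam_m_sum: "complex_of_real (sqrt 2) * (lam_p k + lam_m k) = iexp (-k) - iexp k"
  by (simp add: lam_p_def lam_m_def complex_eq_iff sin_theta)

lemma lam_p_lam_m_prod: "lam_p k * lam_m k = -1"
  unfolding lam_p_def lam_m_def mult_minus_right iexp_add[symmetric] by simp

lemma iexp_minus_mult: "iexp (-k) * iexp k = 1"
  unfolding iexp_add[symmetric] by simp

lemma sqrt2_sq: "complex_of_real (sqrt 2) * complex_of_real (sqrt 2) = 2"
  by (simp flip: of_real_mult)

lemma eigenvectors:
  "iexp (-k) * (eigP1 al be k + eigP2 al be k) / complex_of_real (sqrt 2) = lam_p k * eigP1 al be k"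
  "iexp k * (eigP1 al be k - eigP2 al be k) / complex_of_real (sqrt 2) = lam_p k * eigP2 al be k"
  "iexp (-k) * (eigQ1 al be k + eigQ2 al be k) / complex_of_real (sqrt 2) = lam_m k * eigQ1 al be k"
  "iexp k * (eigQ1 al be k - eigQ2 al be k) / complex_of_real (sqrt 2) = lam_m k * eigQ2 al be k"
  using eigen_identities[OF iexp_minus_mult sqrt2_sq lam_p_lam_m_sum lam_p_lam_m_prod lam_gap_def lam_gap_nz]
  unfolding eigP1_def eigP2_def eigQ1_def eigQ2_def step1_def step2_def by simp_all

lemma PQ_sum: "eigP1 al be k + eigQ1 al be k = al" "eigP2 al be k + eigQ2 al be k = be"
proof -
  have "step1 al be k - lam_m k * al + (lam_p k * al - step1 al be k) = al * lam_gap k"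
    "step2 al be k - lam_m k * be + (lam_p k * be - step2 al be k) = be * lam_gap k"
    by (simp_all add: lam_gap_def algebra_simps)
  then show "eigP1 al be k + eigQ1 al be k = al" "eigP2 al be k + eigQ2 al be k = be"
    using lam_gap_nz[of k]
    unfolding eigP1_def eigQ1_def eigP2_def eigQ2_def add_divide_distrib[symmetric] by simp_all
qed

lemma spectral:
  "hatA al be n k = lam_p k ^ n * eigP1 al be k + lam_m k ^ n * eigQ1 al be k \<and>
   hatB al be n k = lam_p k ^ n * eigP2 al be k + lam_m k ^ n * eigQ2 al be k"
proof (induction n)
  case 0
  then show ?case by (simp add: hatA_0 hatB_0 PQ_sum)
next
  case (Suc n)
  let ?s = "complex_of_real (sqrt 2)"
  have a: "iexp (-k) * ((lam_p k ^ n * eigP1 al be k + lam_m k ^ n * eigQ1 al be k)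
                       + (lam_p k ^ n * eigP2 al be k + lam_m k ^ n * eigQ2 al be k)) / ?s
     = lam_p k ^ n * (iexp (-k) * (eigP1 al be k + eigP2 al be k) / ?s)
       + lam_m k ^ n * (iexp (-k) * (eigQ1 al be k + eigQ2 al be k) / ?s)"
    by (simp add: algebra_simps add_divide_distrib)
  have b: "iexp k * ((lam_p k ^ n * eigP1 al be k + lam_m k ^ n * eigQ1 al be k)
                    - (lam_p k ^ n * eigP2 al be k + lam_m k ^ n * eigQ2 al be k)) / ?s
     = lam_p k ^ n * (iexp k * (eigP1 al be k - eigP2 al be k) / ?s)
       + lam_m k ^ n * (iexp k * (eigQ1 al be k - eigQ2 al be k) / ?s)"
    by (simp add: algebra_simps add_divide_distrib diff_divide_distrib)
  show ?case
    unfolding hatA_Suc hatB_Suc Suc.IH[THEN conjunct1] Suc.IH[THEN conjunct2] a b eigenvectors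
    by simp
qed

definition ip2 :: "complex \<Rightarrow> complex \<Rightarrow> complex \<Rightarrow> complex \<Rightarrow> complex" where
  "ip2 x1 x2 y1 y2 = cnj x1 * y1 + cnj x2 * y2"

lemma unitary_alg:
  fixes E F q x1 x2 y1 y2 :: complex
  assumes "cnj E * E = 1" "cnj F * F = 1" "cnj q = q" "q * q = 2"
  shows "cnj (E*(x1+x2)/q) * (E*(y1+y2)/q) + cnj (F*(x1-x2)/q) * (F*(y1-y2)/q)
         = cnj x1 * y1 + cnj x2 * y2"
proof -
  have q: "q \<noteq> 0" using assms(4) by auto
  have "cnj (E*(x1+x2)/q) * (E*(y1+y2)/q) + cnj (F*(x1-x2)/q) * (F*(y1-y2)/q)
     = ((cnj E * E) * (cnj x1 + cnj x2) * (y1 + y2) + (cnj F * F) * (cnj x1 - cnj x2) * (y1 - y2)) / (q * q)"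
    using assms(3) q by (simp add: field_simps)
  also have "\<dots> = cnj x1 * y1 + cnj x2 * y2" using assms by (simp add: field_simps; algebra)
  finally show ?thesis .
qed

lemma cnj_iexp: "cnj (iexp x) = iexp (-x)"
  by (simp add: exp_cnj)

lemma cnj_iexp_mult: "cnj (iexp x) * iexp x = 1"
  unfolding cnj_iexp iexp_add[symmetric] by simp

lemma unitary:
  "ip2 (iexp (-k) * (x1 + x2) / complex_of_real (sqrt 2)) (iexp k * (x1 - x2) / complex_of_real (sqrt 2))
      (iexp (-k) * (y1 + y2) / complex_of_real (sqrt 2)) (iexp k * (y1 - y2) / complex_of_real (sqrt 2))
   = ip2 x1 x2 y1 y2"
  unfolding ip2_def by (rule unitary_alg) (rule cnj_iexp_mult, rule cnj_iexp_mult, simp, rule sqrt2_sq)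

text \<open>The eigenvalues are distinct points of the unit circle: \<open>\<lambda>\<^sub>+ \<noteq> \<lambda>\<^sub>-\<close> in the form
  \<open>cnj \<lambda>\<^sub>+ \<lambda>\<^sub>- \<noteq> 1\<close>, needed for orthogonality of the eigenvectors.\<close>
lemma cnj_lam_p_lam_m: "cnj (lam_p k) * lam_m k \<noteq> 1"
proof
  assume h: "cnj (lam_p k) * lam_m k = 1"
  have "cnj (lam_p k) * lam_m k = - iexp (- (2 * theta k))"
    unfolding lam_p_def lam_m_def cnj_iexp mult_minus_right iexp_add[symmetric] by simp
  moreover have "Re (- iexp (- (2 * theta k))) = - cos (2 * theta k)"
    by (simp only: uminus_complex.sel Re_iexp cos_minus)
  ultimately have "Re (cnj (lam_p k) * lam_m k) = - cos (2 * theta k)" by simp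
  also have "\<dots> = - (1 - 2 * (sin (theta k))\<^sup>2)" by (simp add: cos_double_sin)
  also have "\<dots> \<le> 0"
  proof -
    have "(sin k)\<^sup>2 \<le> 1" by (simp add: abs_square_le_1)
    then have "(sin (theta k))\<^sup>2 \<le> 1/2" unfolding sin_theta by (simp add: power_divide)
    then show ?thesis by simp
  qed
  finally show False using h by simp
qed

text \<open>Eigenvectors of a unitary matrix for distinct eigenvalues are orthogonal.\<close>
lemma ortho: "ip2 (eigP1 al be k) (eigP2 al be k) (eigQ1 al be k) (eigQ2 al be k) = 0"
proof -
  let ?x = "ip2 (eigP1 al be k) (eigP2 al be k) (eigQ1 al be k) (eigQ2 al be k)"
  have "?x = ip2 (lam_p k * eigP1 al be k) (lam_p k * eigP2 al be k)
                 (lam_m k * eigQ1 al be k) (lam_m k * eigQ2 al be k)"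
    unfolding eigenvectors[symmetric] by (rule unitary[symmetric])
  also have "\<dots> = (cnj (lam_p k) * lam_m k) * ?x" by (simp add: ip2_def algebra_simps)
  finally have "(1 - cnj (lam_p k) * lam_m k) * ?x = 0" by (simp add: algebra_simps)
  then show ?thesis using cnj_lam_p_lam_m[of k] by simp
qed

lemma ortho': "ip2 (eigQ1 al be k) (eigQ2 al be k) (eigP1 al be k) (eigP2 al be k) = 0"
proof -
  have "ip2 (eigQ1 al be k) (eigQ2 al be k) (eigP1 al be k) (eigP2 al be k)
        = cnj (ip2 (eigP1 al be k) (eigP2 al be k) (eigQ1 al be k) (eigQ2 al be k))"
    by (simp add: ip2_def mult.commute)
  then show ?thesis using ortho by simp
qed

lemma ip2_self: "ip2 x1 x2 x1 x2 = complex_of_real ((cmod x1)\<^sup>2 + (cmod x2)\<^sup>2)"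
  unfolding ip2_def of_real_add complex_norm_square by (simp add: mult.commute)

text \<open>Pythagoras for the orthogonal decomposition \<open>(al, be) = P(k) + Q(k)\<close>.\<close>
lemma norm_sum_PQ:
  "(cmod (eigP1 al be k))\<^sup>2 + (cmod (eigP2 al be k))\<^sup>2 + ((cmod (eigQ1 al be k))\<^sup>2 + (cmod (eigQ2 al be k))\<^sup>2)
   = (cmod al)\<^sup>2 + (cmod be)\<^sup>2"
proof -
  let ?P1 = "eigP1 al be k" and ?P2 = "eigP2 al be k" and ?Q1 = "eigQ1 al be k" and ?Q2 = "eigQ2 al be k"
  have "ip2 al be al be = ip2 (?P1 + ?Q1) (?P2 + ?Q2) (?P1 + ?Q1) (?P2 + ?Q2)"
    by (simp add: PQ_sum)
  also have "\<dots> = ip2 ?P1 ?P2 ?P1 ?P2 + ip2 ?Q1 ?Q2 ?Q1 ?Q2 + ip2 ?P1 ?P2 ?Q1 ?Q2 + ip2 ?Q1 ?Q2 ?P1 ?P2"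
    by (simp add: ip2_def algebra_simps)
  finally show ?thesis unfolding ortho ortho' ip2_self by (simp flip: of_real_add)
qed

lemma PQ_bound:
  assumes "(cmod al)\<^sup>2 + (cmod be)\<^sup>2 = 1"
  shows "cmod (eigP1 al be k) \<le> 1" "cmod (eigP2 al be k) \<le> 1"
    "cmod (eigQ1 al be k) \<le> 1" "cmod (eigQ2 al be k) \<le> 1"
proof -
  note h = norm_sum_PQ[of al be k, unfolded assms]
  have sq: "x\<^sup>2 \<le> 1 \<Longrightarrow> x \<ge> 0 \<Longrightarrow> x \<le> 1" for x :: real by (simp add: abs_square_le_1)
  have "(cmod (eigP1 al be k))\<^sup>2 \<ge> 0" "(cmod (eigP2 al be k))\<^sup>2 \<ge> 0"
    "(cmod (eigQ1 al be k))\<^sup>2 \<ge> 0" "(cmod (eigQ2 al be k))\<^sup>2 \<ge> 0"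
    by simp_all
  note nonneg = this
  show "cmod (eigP1 al be k) \<le> 1" by (rule sq) (use h nonneg in linarith, simp)
  show "cmod (eigP2 al be k) \<le> 1" by (rule sq) (use h nonneg in linarith, simp)
  show "cmod (eigQ1 al be k) \<le> 1" by (rule sq) (use h nonneg in linarith, simp)
  show "cmod (eigQ2 al be k) \<le> 1" by (rule sq) (use h nonneg in linarith, simp)
qed

subsection \<open>Uniform convergence of the characteristic-function integrand\<close>

lemma theta_deriv: "(theta has_real_derivative vel k) (at k)"
proof -
  have b: "-1 < sin k / sqrt 2" "sin k / sqrt 2 < 1" using sin_k_bound[of k] by linarith+
  have d1: "((\<lambda>k. sin k / sqrt 2) has_real_derivative cos k / sqrt 2) (at k)"
    by (rule DERIV_cdivide) (rule DERIV_sin)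
  have d2: "(arcsin has_real_derivative inverse (sqrt (1 - (sin k / sqrt 2)\<^sup>2))) (at (sin k / sqrt 2))"
    by (rule DERIV_arcsin) (use b in auto)
  have d: "(theta has_real_derivative - (inverse (sqrt (1 - (sin k / sqrt 2)\<^sup>2)) * (cos k / sqrt 2))) (at k)"
    unfolding theta_def[abs_def] by (rule DERIV_minus, rule DERIV_chain2[OF d2 d1])
  have e: "sqrt (1 - (sin k / sqrt 2)\<^sup>2) * sqrt 2 = sqrt (1 + (cos k)\<^sup>2)"
  proof -
    have "(1 - (sin k / sqrt 2)\<^sup>2) * 2 = 1 + (cos k)\<^sup>2"
      using sin_cos_squared_add[of k] by (simp add: power_divide algebra_simps)
    then show ?thesis by (metis real_sqrt_mult)
  qed
  have "- (inverse (sqrt (1 - (sin k / sqrt 2)\<^sup>2)) * (cos k / sqrt 2)) = vel k"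
    unfolding vel_def e[symmetric] by (simp add: field_simps)
  then show ?thesis using d by simp
qed

lemma isCont_vel: "isCont vel k"
proof -
  have "0 < 1 + (cos k)\<^sup>2" using zero_le_power2[of "cos k"] by linarith
  then have "sqrt (1 + (cos k)\<^sup>2) \<noteq> 0" by simp
  then show ?thesis unfolding vel_def[abs_def] by (intro continuous_intros) auto
qed

lemma isCont_lam_p[continuous_intros]: "isCont lam_p k"
  unfolding lam_p_def[abs_def] by (intro continuous_intros DERIV_isCont[OF theta_deriv])
lemma isCont_lam_m[continuous_intros]: "isCont lam_m k"
  unfolding lam_m_def[abs_def] by (intro continuous_intros DERIV_isCont[OF theta_deriv])

lemma isCont_eigP1: "isCont (eigP1 al be) k" and isCont_eigP2: "isCont (eigP2 al be) k"
  and isCont_eigQ1: "isCont (eigQ1 al be) k" and isCont_eigQ2: "isCont (eigQ2 al be) k"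
  unfolding eigP1_def[abs_def] eigP2_def[abs_def] eigQ1_def[abs_def] eigQ2_def[abs_def]
    step1_def[abs_def] step2_def[abs_def] lam_gap_def[abs_def]
  using lam_gap_nz[of k] unfolding lam_gap_def by (auto intro!: continuous_intros)

lemma uniformly_continuous_near_circle:
  fixes f :: "real \<Rightarrow> 'a::real_normed_vector"
  assumes c: "\<And>x. isCont f x" and e: "0 < e"
  shows "\<exists>d>0. \<forall>k\<in>{0..2*pi}. \<forall>k'. \<bar>k' - k\<bar> < d \<longrightarrow> norm (f k' - f k) < e"
proof -
  have "uniformly_continuous_on {-1..2*pi+1} f"
    by (rule compact_uniformly_continuous) (auto intro!: continuous_at_imp_continuous_on c)
  then obtain d where d: "d > 0"
    "\<And>x x'. x \<in> {-1..2*pi+1} \<Longrightarrow> x' \<in> {-1..2*pi+1} \<Longrightarrow> dist x' x < d \<Longrightarrow> dist (f x') (f x) < e"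
    unfolding uniformly_continuous_on_def using e by metis
  show ?thesis
  proof (rule exI[of _ "min d 1"], intro conjI ballI allI impI)
    show "0 < min d 1" using d by simp
    fix k k' assume k: "k \<in> {0..2*pi}" and kk: "\<bar>k' - k\<bar> < min d 1"
    then have "k \<in> {-1..2*pi+1}" "k' \<in> {-1..2*pi+1}" "dist k' k < d" by (auto simp: dist_real_def)
    from d(2)[OF this] show "norm (f k' - f k) < e" by (simp add: dist_norm)
  qed
qed

lemma iexp_dist: "norm (iexp a - iexp b) \<le> \<bar>a - b\<bar>"
proof -
  have "iexp b * iexp (a - b) = iexp a" unfolding iexp_add[symmetric] by simp
  then have "iexp a - iexp b = iexp b * (iexp (a - b) - 1)"
    by (simp add: right_diff_distrib)
  moreover have "cmod (iexp (a - b) - 1) \<le> \<bar>a - b\<bar>" using iexp_approx1[of "a - b" 0] by simp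
  moreover have "norm (iexp b) = 1" by (simp add: norm_exp_i_times)
  ultimately show ?thesis by (simp add: norm_mult)
qed

lemma mvt_theta: "\<exists>\<xi>. \<bar>\<xi> - k\<bar> \<le> \<bar>s\<bar> \<and> theta (k + s) - theta k = s * vel \<xi>"
proof (cases "s = 0")
  case True then show ?thesis by (intro exI[of _ k]) simp
next
  case False
  show ?thesis
  proof (cases "s > 0")
    case True
    obtain z where "k < z" "z < k + s" "theta (k + s) - theta k = (k + s - k) * vel z"
      using MVT2[of k "k + s" theta vel] True theta_deriv by auto
    then show ?thesis by (intro exI[of _ z]) auto
  next
    case False2: False
    then have "s < 0" using False by simp
    obtain z where "k + s < z" "z < k" "theta k - theta (k + s) = (k - (k + s)) * vel z"
      using MVT2[of "k + s" k theta vel] \<open>s < 0\<close> theta_deriv by auto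
    then show ?thesis using \<open>s < 0\<close> by (intro exI[of _ z]) (auto simp: algebra_simps)
  qed
qed

lemma phase_conv:
  assumes "0 < e"
  shows "\<exists>d>0. \<forall>k\<in>{0..2*pi}. \<forall>n>0. \<bar>t\<bar> / real n < d \<longrightarrow>
     norm (iexp (real n * (theta (k + t / real n) - theta k)) - iexp (t * vel k)) \<le> \<bar>t\<bar> * e"
proof -
  obtain d where d: "d > 0" "\<forall>k\<in>{0..2*pi}. \<forall>k'. \<bar>k' - k\<bar> < d \<longrightarrow> norm (vel k' - vel k) < e"
    using uniformly_continuous_near_circle[OF isCont_vel assms] by blast
  show ?thesis
  proof (rule exI[of _ d], intro conjI ballI allI impI)
    fix k n assume k: "k \<in> {0..2*pi}" and n: "0 < n" and tn: "\<bar>t\<bar> / real n < d"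
    obtain \<xi> where xi: "\<bar>\<xi> - k\<bar> \<le> \<bar>t / real n\<bar>"
      "theta (k + t / real n) - theta k = t / real n * vel \<xi>"
      using mvt_theta by blast
    have eq: "real n * (theta (k + t / real n) - theta k) = t * vel \<xi>" using n xi(2) by simp
    have "norm (iexp (real n * (theta (k + t / real n) - theta k)) - iexp (t * vel k))
          \<le> \<bar>t * vel \<xi> - t * vel k\<bar>"
      unfolding eq by (rule iexp_dist)
    also have "\<dots> = \<bar>t\<bar> * \<bar>vel \<xi> - vel k\<bar>" by (simp add: abs_mult[symmetric] algebra_simps)
    also have "\<dots> \<le> \<bar>t\<bar> * e"
    proof -
      have "\<bar>\<xi> - k\<bar> < d" using xi(1) tn n by (simp add: abs_div)
      then have "\<bar>vel \<xi> - vel k\<bar> < e" using d(2) k by auto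
      then show ?thesis by (simp add: mult_left_mono)
    qed
    finally show "norm (iexp (real n * (theta (k + t / real n) - theta k)) - iexp (t * vel k)) \<le> \<bar>t\<bar> * e" .
  qed (use d in simp)
qed

text \<open>The integrand \<open>\<langle>\<hat>\<Psi>\<^sub>n(k), \<hat>\<Psi>\<^sub>n(k + t/n)\<rangle>\<close> whose integral is \<open>2\<pi>\<close> times the
  characteristic function of \<open>X\<^sub>n/n\<close> at \<open>t\<close>, the squared lengths of the two spectral
  components, and the pointwise limit of the integrand.\<close>
definition char_integrand :: "complex \<Rightarrow> complex \<Rightarrow> nat \<Rightarrow> real \<Rightarrow> real \<Rightarrow> complex" where
  "char_integrand al be n t k =
     cnj (hatA al be n k) * hatA al be n (k + t / real n) + cnj (hatB al be n k) * hatB al be n (k + t / real n)"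
definition wP :: "complex \<Rightarrow> complex \<Rightarrow> real \<Rightarrow> complex" where
  "wP al be k = ip2 (eigP1 al be k) (eigP2 al be k) (eigP1 al be k) (eigP2 al be k)"
definition wQ :: "complex \<Rightarrow> complex \<Rightarrow> real \<Rightarrow> complex" where
  "wQ al be k = ip2 (eigQ1 al be k) (eigQ2 al be k) (eigQ1 al be k) (eigQ2 al be k)"
definition limit_integrand :: "complex \<Rightarrow> complex \<Rightarrow> real \<Rightarrow> real \<Rightarrow> complex" where
  "limit_integrand al be t k = iexp (t * vel k) * wP al be k + iexp (- (t * vel k)) * wQ al be k"

lemma iexp_pow: "iexp x ^ n = iexp (real n * x)"
  by (simp add: exp_of_nat_mult[symmetric] mult_ac)

lemma norm_lam_p[simp]: "norm (lam_p k) = 1" and norm_lam_m[simp]: "norm (lam_m k) = 1"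
  by (simp_all add: lam_p_def lam_m_def norm_exp_i_times)

lemma ip2_diff: "ip2 x1 x2 y1' y2' - ip2 x1 x2 y1 y2 = ip2 x1 x2 (y1' - y1) (y2' - y2)"
  by (simp add: ip2_def algebra_simps)

lemma ip2_bound: "norm x1 \<le> 1 \<Longrightarrow> norm x2 \<le> 1 \<Longrightarrow> norm (ip2 x1 x2 y1 y2) \<le> norm y1 + norm y2"
proof -
  assume a: "norm x1 \<le> 1" "norm x2 \<le> 1"
  have "norm (ip2 x1 x2 y1 y2) \<le> norm x1 * norm y1 + norm x2 * norm y2"
    unfolding ip2_def by (rule order_trans[OF norm_triangle_ineq]) (simp add: norm_mult)
  also have "\<dots> \<le> 1 * norm y1 + 1 * norm y2"
    by (intro add_mono mult_right_mono) (use a in auto)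
  finally show ?thesis by simp
qed

text \<open>Expanding the integrand by the spectral representation: the diagonal terms carry the
  phases \<open>e^{\<plusminus>\<i>n(\<theta>(k+t/n) - \<theta>(k))}\<close>, the cross terms are overlaps of nearly orthogonal vectors.\<close>
lemma char_integrand_expand:
  "char_integrand al be n t k =
     iexp (real n * (theta (k + t / real n) - theta k))
       * ip2 (eigP1 al be k) (eigP2 al be k) (eigP1 al be (k + t / real n)) (eigP2 al be (k + t / real n))
   + (cnj (lam_p k) ^ n * lam_m (k + t / real n) ^ n)
       * ip2 (eigP1 al be k) (eigP2 al be k) (eigQ1 al be (k + t / real n)) (eigQ2 al be (k + t / real n))
   + (cnj (lam_m k) ^ n * lam_p (k + t / real n) ^ n)
       * ip2 (eigQ1 al be k) (eigQ2 al be k) (eigP1 al be (k + t / real n)) (eigP2 al be (k + t / real n))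
   + iexp (- (real n * (theta (k + t / real n) - theta k)))
       * ip2 (eigQ1 al be k) (eigQ2 al be k) (eigQ1 al be (k + t / real n)) (eigQ2 al be (k + t / real n))"
proof -
  let ?k = "k + t / real n"
  have a: "cnj (lam_p k) ^ n * lam_p ?k ^ n = iexp (real n * (theta ?k - theta k))"
    unfolding power_mult_distrib[symmetric] lam_p_def cnj_iexp iexp_add[symmetric] iexp_pow
    by (simp add: algebra_simps)
  have b: "cnj (lam_m k) ^ n * lam_m ?k ^ n = iexp (- (real n * (theta ?k - theta k)))"
  proof -
    have c: "cnj (lam_m k) * lam_m ?k = iexp (theta k - theta ?k)"
      unfolding lam_m_def complex_cnj_minus cnj_iexp minus_minus mult_minus_left mult_minus_right
        minus_minus iexp_add[symmetric]
      by simp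
    show ?thesis unfolding power_mult_distrib[symmetric] c iexp_pow
      by (rule arg_cong[where f=iexp]) (simp add: algebra_simps)
  qed
  show ?thesis
    unfolding char_integrand_def spectral[THEN conjunct1] spectral[THEN conjunct2] a[symmetric] b[symmetric]
    by (simp add: ip2_def algebra_simps)
qed

definition eig_distP :: "complex \<Rightarrow> complex \<Rightarrow> real \<Rightarrow> real \<Rightarrow> real" where
  "eig_distP al be k k' = norm (eigP1 al be k' - eigP1 al be k) + norm (eigP2 al be k' - eigP2 al be k)"
definition eig_distQ :: "complex \<Rightarrow> complex \<Rightarrow> real \<Rightarrow> real \<Rightarrow> real" where
  "eig_distQ al be k k' = norm (eigQ1 al be k' - eigQ1 al be k) + norm (eigQ2 al be k' - eigQ2 al be k)"

text \<open>Overlaps of the spectral components at nearby frequencies: the diagonal ones are close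
  to \<open>wP, wQ\<close> and the cross ones close to \<open>0\<close>, by orthogonality at equal frequencies.\<close>
lemma eig_overlap_bounds:
  assumes nrm: "(cmod al)\<^sup>2 + (cmod be)\<^sup>2 = 1"
  shows "norm (ip2 (eigP1 al be k) (eigP2 al be k) (eigP1 al be k') (eigP2 al be k')) \<le> 2"
    and "norm (ip2 (eigQ1 al be k) (eigQ2 al be k) (eigQ1 al be k') (eigQ2 al be k')) \<le> 2"
    and "norm (ip2 (eigP1 al be k) (eigP2 al be k) (eigP1 al be k') (eigP2 al be k') - wP al be k)
           \<le> eig_distP al be k k'"
    and "norm (ip2 (eigQ1 al be k) (eigQ2 al be k) (eigQ1 al be k') (eigQ2 al be k') - wQ al be k)
           \<le> eig_distQ al be k k'"
    and "norm (ip2 (eigP1 al be k) (eigP2 al be k) (eigQ1 al be k') (eigQ2 al be k')) \<le> eig_distQ al be k k'"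
    and "norm (ip2 (eigQ1 al be k) (eigQ2 al be k) (eigP1 al be k') (eigP2 al be k')) \<le> eig_distP al be k k'"
proof -
  note B = PQ_bound[OF nrm]
  show "norm (ip2 (eigP1 al be k) (eigP2 al be k) (eigP1 al be k') (eigP2 al be k')) \<le> 2"
    using ip2_bound[OF B(1,2)[of k], of "eigP1 al be k'" "eigP2 al be k'"] B(1,2)[of k'] by linarith
  show "norm (ip2 (eigQ1 al be k) (eigQ2 al be k) (eigQ1 al be k') (eigQ2 al be k')) \<le> 2"
    using ip2_bound[OF B(3,4)[of k], of "eigQ1 al be k'" "eigQ2 al be k'"] B(3,4)[of k'] by linarith
  show "norm (ip2 (eigP1 al be k) (eigP2 al be k) (eigP1 al be k') (eigP2 al be k') - wP al be k)
          \<le> eig_distP al be k k'"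
    unfolding wP_def ip2_diff eig_distP_def by (rule ip2_bound) (simp_all add: B)
  show "norm (ip2 (eigQ1 al be k) (eigQ2 al be k) (eigQ1 al be k') (eigQ2 al be k') - wQ al be k)
          \<le> eig_distQ al be k k'"
    unfolding wQ_def ip2_diff eig_distQ_def by (rule ip2_bound) (simp_all add: B)
  have "ip2 (eigP1 al be k) (eigP2 al be k) (eigQ1 al be k') (eigQ2 al be k')
        = ip2 (eigP1 al be k) (eigP2 al be k) (eigQ1 al be k' - eigQ1 al be k) (eigQ2 al be k' - eigQ2 al be k)"
    unfolding ip2_diff[symmetric] by (simp add: ortho)
  then show "norm (ip2 (eigP1 al be k) (eigP2 al be k) (eigQ1 al be k') (eigQ2 al be k')) \<le> eig_distQ al be k k'"
    unfolding eig_distQ_def using ip2_bound B by simp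
  have "ip2 (eigQ1 al be k) (eigQ2 al be k) (eigP1 al be k') (eigP2 al be k')
        = ip2 (eigQ1 al be k) (eigQ2 al be k) (eigP1 al be k' - eigP1 al be k) (eigP2 al be k' - eigP2 al be k)"
    unfolding ip2_diff[symmetric] by (simp add: ortho')
  then show "norm (ip2 (eigQ1 al be k) (eigQ2 al be k) (eigP1 al be k') (eigP2 al be k')) \<le> eig_distP al be k k'"
    unfolding eig_distP_def using ip2_bound B by simp
qed

lemma norm_sum6:
  fixes a b c d e f :: "'a::real_normed_vector"
  shows "norm (a + b + c + d + e + f) \<le> norm a + norm b + norm c + norm d + norm e + norm f"
  using norm_triangle_ineq[of "a+b+c+d+e" f] norm_triangle_ineq[of "a+b+c+d" e]
    norm_triangle_ineq[of "a+b+c" d] norm_triangle_ineq[of "a+b" c] norm_triangle_ineq[of a b]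
  by linarith

lemma char_integrand_limit_bound:
  assumes nrm: "(cmod al)\<^sup>2 + (cmod be)\<^sup>2 = 1"
  shows "norm (char_integrand al be n t k - limit_integrand al be t k) \<le>
    4 * norm (iexp (real n * (theta (k + t / real n) - theta k)) - iexp (t * vel k))
    + 2 * eig_distP al be k (k + t / real n) + 2 * eig_distQ al be k (k + t / real n)"
proof -
  let ?k = "k + t / real n"
  define X where "X = real n * (theta ?k - theta k)"
  define Y where "Y = t * vel k"
  define pP where "pP = ip2 (eigP1 al be k) (eigP2 al be k) (eigP1 al be ?k) (eigP2 al be ?k)"
  define pQ where "pQ = ip2 (eigP1 al be k) (eigP2 al be k) (eigQ1 al be ?k) (eigQ2 al be ?k)"
  define qP where "qP = ip2 (eigQ1 al be k) (eigQ2 al be k) (eigP1 al be ?k) (eigP2 al be ?k)"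
  define qQ where "qQ = ip2 (eigQ1 al be k) (eigQ2 al be k) (eigQ1 al be ?k) (eigQ2 al be ?k)"
  define dP where "dP = eig_distP al be k ?k"
  define dQ where "dQ = eig_distQ al be k ?k"
  note bounds = eig_overlap_bounds[OF nrm, of k ?k, folded pP_def pQ_def qP_def qQ_def dP_def dQ_def]
  have "char_integrand al be n t k - limit_integrand al be t k =
     (iexp X - iexp Y) * pP + iexp Y * (pP - wP al be k)
     + (cnj (lam_p k) ^ n * lam_m ?k ^ n) * pQ + (cnj (lam_m k) ^ n * lam_p ?k ^ n) * qP
     + (iexp (-X) - iexp (-Y)) * qQ + iexp (-Y) * (qQ - wQ al be k)"
    unfolding char_integrand_expand limit_integrand_def X_def Y_def pP_def pQ_def qP_def qQ_def
    by (simp add: algebra_simps)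
  also have "norm \<dots> \<le> norm (iexp X - iexp Y) * 2 + dP + dQ + dP + norm (iexp X - iexp Y) * 2 + dQ"
  proof -
    have conj: "norm (iexp (-X) - iexp (-Y)) = norm (iexp X - iexp Y)"
    proof -
      have "iexp (-X) - iexp (-Y) = cnj (iexp X - iexp Y)" by (simp only: complex_cnj_diff cnj_iexp)
      then show ?thesis by (simp only: complex_mod_cnj)
    qed
    have unit: "norm (iexp Y) = 1" "norm (iexp (-Y)) = 1"
      "norm (cnj (lam_p k) ^ n * lam_m ?k ^ n) = 1" "norm (cnj (lam_m k) ^ n * lam_p ?k ^ n) = 1"
      by (simp_all add: norm_exp_i_times norm_mult norm_power)
    have "norm ((iexp X - iexp Y) * pP) \<le> norm (iexp X - iexp Y) * 2"
      "norm ((iexp (-X) - iexp (-Y)) * qQ) \<le> norm (iexp X - iexp Y) * 2"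
      unfolding norm_mult conj by (simp_all add: mult_left_mono bounds(1,2))
    moreover have "norm (iexp Y * (pP - wP al be k)) \<le> dP" "norm (iexp (-Y) * (qQ - wQ al be k)) \<le> dQ"
      "norm ((cnj (lam_p k) ^ n * lam_m ?k ^ n) * pQ) \<le> dQ"
      "norm ((cnj (lam_m k) ^ n * lam_p ?k ^ n) * qP) \<le> dP"
      unfolding norm_mult unit using bounds(3-6) by (simp_all add: norm_power)
    ultimately show ?thesis by (intro order_trans[OF norm_sum6]) linarith
  qed
  finally show ?thesis unfolding X_def Y_def dP_def dQ_def by simp
qed

lemma isCont_limit_integrand: "isCont (limit_integrand al be t) k"
  unfolding limit_integrand_def[abs_def] wP_def[abs_def] wQ_def[abs_def] ip2_def
  by (intro continuous_intros isCont_vel isCont_eigP1 isCont_eigP2 isCont_eigQ1 isCont_eigQ2)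

lemma isCont_char_integrand: "isCont (char_integrand al be n t) k"
  unfolding char_integrand_def[abs_def] hatA_def hatB_def fourier_def
  by (intro continuous_intros)

lemma eig_dist_small:
  assumes "0 < e"
  shows "\<exists>d>0. \<forall>k\<in>{0..2*pi}. \<forall>k'. \<bar>k' - k\<bar> < d \<longrightarrow> eig_distP al be k k' < e \<and> eig_distQ al be k k' < e"
proof -
  have e2: "e / 2 > 0" using assms by simp
  obtain d1 where d1: "d1 > 0" "\<forall>k\<in>{0..2*pi}. \<forall>k'. \<bar>k' - k\<bar> < d1 \<longrightarrow> norm (eigP1 al be k' - eigP1 al be k) < e/2"
    using uniformly_continuous_near_circle[OF isCont_eigP1 e2] by blast
  obtain d2 where d2: "d2 > 0" "\<forall>k\<in>{0..2*pi}. \<forall>k'. \<bar>k' - k\<bar> < d2 \<longrightarrow> norm (eigP2 al be k' - eigP2 al be k) < e/2"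
    using uniformly_continuous_near_circle[OF isCont_eigP2 e2] by blast
  obtain d3 where d3: "d3 > 0" "\<forall>k\<in>{0..2*pi}. \<forall>k'. \<bar>k' - k\<bar> < d3 \<longrightarrow> norm (eigQ1 al be k' - eigQ1 al be k) < e/2"
    using uniformly_continuous_near_circle[OF isCont_eigQ1 e2] by blast
  obtain d4 where d4: "d4 > 0" "\<forall>k\<in>{0..2*pi}. \<forall>k'. \<bar>k' - k\<bar> < d4 \<longrightarrow> norm (eigQ2 al be k' - eigQ2 al be k) < e/2"
    using uniformly_continuous_near_circle[OF isCont_eigQ2 e2] by blast
  define d where "d = min (min d1 d2) (min d3 d4)"
  have "\<forall>k\<in>{0..2*pi}. \<forall>k'. \<bar>k' - k\<bar> < d \<longrightarrow> eig_distP al be k k' < e \<and> eig_distQ al be k k' < e"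
  proof (intro ballI allI impI)
    fix k k' assume "k \<in> {0..2*pi}" "\<bar>k' - k\<bar> < d"
    then have "norm (eigP1 al be k' - eigP1 al be k) < e/2" "norm (eigP2 al be k' - eigP2 al be k) < e/2"
      "norm (eigQ1 al be k' - eigQ1 al be k) < e/2" "norm (eigQ2 al be k' - eigQ2 al be k) < e/2"
      using d1 d2 d3 d4 unfolding d_def by auto
    then show "eig_distP al be k k' < e \<and> eig_distQ al be k k' < e"
      unfolding eig_distP_def eig_distQ_def by linarith
  qed
  moreover have "d > 0" using d1 d2 d3 d4 by (simp add: d_def)
  ultimately show ?thesis by blast
qed

lemma char_integrand_uniform_limit:
  assumes nrm: "(cmod al)\<^sup>2 + (cmod be)\<^sup>2 = 1"
  shows "uniform_limit {0..2*pi} (\<lambda>n. char_integrand al be n t) (limit_integrand al be t) sequentially"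
  unfolding uniform_limit_iff dist_norm
proof (intro allI impI)
  fix e :: real assume e: "e > 0"
  define \<eta> where "\<eta> = e / (4 * \<bar>t\<bar> + 5)"
  have eta: "\<eta> > 0" using e by (simp add: \<eta>_def add_nonneg_pos)
  obtain d0 where d0: "d0 > 0" "\<forall>k\<in>{0..2*pi}. \<forall>n>0. \<bar>t\<bar> / real n < d0 \<longrightarrow>
     norm (iexp (real n * (theta (k + t / real n) - theta k)) - iexp (t * vel k)) \<le> \<bar>t\<bar> * \<eta>"
    using phase_conv[OF eta] by blast
  obtain d1 where d1: "d1 > 0" "\<forall>k\<in>{0..2*pi}. \<forall>k'. \<bar>k' - k\<bar> < d1 \<longrightarrow>
     eig_distP al be k k' < \<eta> \<and> eig_distQ al be k k' < \<eta>"
    using eig_dist_small[OF eta] by blast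
  define d where "d = min d0 d1"
  have d: "d > 0" using d0 d1 by (simp add: d_def)
  have "\<forall>\<^sub>F n in sequentially. 0 < n \<and> \<bar>t\<bar> / real n < d"
    using order_tendstoD(2)[OF lim_const_over_n[of "\<bar>t\<bar>"] d] eventually_gt_at_top[of 0]
    by eventually_elim auto
  then show "\<forall>\<^sub>F n in sequentially. \<forall>k\<in>{0..2*pi}.
      norm (char_integrand al be n t k - limit_integrand al be t k) < e"
  proof eventually_elim
    case (elim n)
    show ?case
    proof
      fix k assume k: "k \<in> {0..2*pi}"
      have kk: "\<bar>(k + t / real n) - k\<bar> < d" using elim by (simp add: abs_div)
      have a: "norm (iexp (real n * (theta (k + t / real n) - theta k)) - iexp (t * vel k)) \<le> \<bar>t\<bar> * \<eta>"
        using d0(2) k elim unfolding d_def by auto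
      have b: "eig_distP al be k (k + t / real n) < \<eta>" "eig_distQ al be k (k + t / real n) < \<eta>"
        using d1(2) k kk unfolding d_def by auto
      have "norm (char_integrand al be n t k - limit_integrand al be t k) \<le> 4 * (\<bar>t\<bar> * \<eta>) + 2 * \<eta> + 2 * \<eta>"
        using char_integrand_limit_bound[OF nrm, of n t k] a b by linarith
      also have "\<dots> < (4 * \<bar>t\<bar> + 5) * \<eta>" using eta by (simp add: algebra_simps)
      also have "\<dots> = e" by (simp add: \<eta>_def)
      finally show "norm (char_integrand al be n t k - limit_integrand al be t k) < e" .
    qed
  qed
qed

lemma char_integrand_conv:
  assumes nrm: "(cmod al)\<^sup>2 + (cmod be)\<^sup>2 = 1"
  shows "(\<lambda>n. integral {0..2*pi} (char_integrand al be n t)) \<longlonglongrightarrow> integral {0..2*pi} (limit_integrand al be t)"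
proof -
  obtain I J where I: "\<And>n. (char_integrand al be n t has_integral I n) {0..2*pi}"
    and J: "(limit_integrand al be t has_integral J) {0..2*pi}" and lim: "I \<longlonglongrightarrow> J"
    by (rule uniform_limit_integral[OF char_integrand_uniform_limit[OF nrm]])
       (auto intro!: continuous_at_imp_continuous_on isCont_char_integrand)
  have "integral {0..2*pi} (char_integrand al be n t) = I n" for n using I by (rule integral_unique)
  moreover have "integral {0..2*pi} (limit_integrand al be t) = J" using J by (rule integral_unique)
  ultimately show ?thesis using lim by simp
qed
subsection \<open>The limiting weights and the integral of the limit integrand\<close>

text \<open>Since \<open>P \<bottom> Q\<close>, the weight \<open>|P(k)|\<^sup>2\<close> equals \<open>\<langle>P(k), (al, be)\<rangle>\<close>.\<close>
lemma wP_eq_overlap: "wP al be k = ip2 (eigP1 al be k) (eigP2 al be k) al be"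
proof -
  have "ip2 (eigP1 al be k) (eigP2 al be k) al be = ip2 (eigP1 al be k) (eigP2 al be k) (eigP1 al be k + eigQ1 al be k) (eigP2 al be k + eigQ2 al be k)"
    by (simp add: PQ_sum)
  also have "\<dots> = wP al be k + ip2 (eigP1 al be k) (eigP2 al be k) (eigQ1 al be k) (eigQ2 al be k)"
    unfolding wP_def ip2_def by (simp add: algebra_simps)
  finally show ?thesis by (simp add: ortho)
qed

lemma overlap_P_eq: "ip2 (eigP1 al be k) (eigP2 al be k) al be =
   (cnj (step1 al be k) * al + cnj (step2 al be k) * be - cnj (lam_m k) * (cnj al * al + cnj be * be)) / complex_of_real (2 * cos (theta k))"
proof -
  have "cnj (lam_gap k) = complex_of_real (2 * cos (theta k))" by (simp add: lam_gap_eq)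
  then show ?thesis unfolding ip2_def eigP1_def eigP2_def lam_gap_eq using cos_theta_pos[of k]
    by (simp add: field_simps)
qed

lemma alpha_beta_prods:
  "cnj (alpha0 \<omega>) * alpha0 \<omega> = 1/2" "cnj (beta0 \<omega>) * beta0 \<omega> = 1/2"
  "cnj (beta0 \<omega>) * alpha0 \<omega> = - \<i> * cis (\<omega> 0) / 2"
  "cnj (alpha0 \<omega>) * beta0 \<omega> = \<i> * cis (- \<omega> 0) / 2"
  unfolding alpha0_def beta0_def
  by (simp_all add: field_simps sqrt2_sq cis_mult cis_cnj)

lemma cnj_iexp_minus[simp]: "cnj (exp (- (\<i> * complex_of_real x))) = iexp x"
  by (simp add: exp_cnj)

lemma sqrt2_sqrt2_mult: "sqrt 2 * (sqrt 2 * x) = 2 * (x::real)"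
  by (simp add: mult.assoc[symmetric])

text \<open>The numerator of \<open>\<langle>P(k), (\<alpha>\<^sub>0, \<beta>\<^sub>0)\<rangle>\<close> is real; this is where \<open>\<omega>\<^sub>0\<close> enters the limit.\<close>
lemma weight_numerator:
  "cnj (step1 (alpha0 \<omega>) (beta0 \<omega>) k) * alpha0 \<omega> + cnj (step2 (alpha0 \<omega>) (beta0 \<omega>) k) * beta0 \<omega>
     - cnj (lam_m k) * (cnj (alpha0 \<omega>) * alpha0 \<omega> + cnj (beta0 \<omega>) * beta0 \<omega>)
   = complex_of_real (sin (k + \<omega> 0) / sqrt 2 + cos (theta k))"
proof -
  let ?a = "alpha0 \<omega>" and ?b = "beta0 \<omega>" and ?s = "complex_of_real (sqrt 2)"
  have 1: "cnj (step1 ?a ?b k) * ?a = iexp k * (cnj ?a * ?a + cnj ?b * ?a) / ?s"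
    unfolding step1_def by (simp add: cnj_iexp algebra_simps)
  have 2: "cnj (step2 ?a ?b k) * ?b = iexp (-k) * (cnj ?a * ?b - cnj ?b * ?b) / ?s"
    unfolding step2_def by (simp add: cnj_iexp algebra_simps)
  have 3: "cnj (lam_m k) = - iexp (theta k)" unfolding lam_m_def by (simp add: cnj_iexp)
  show ?thesis
    unfolding 1 2 3 alpha_beta_prods iexp_cis
    by (simp add: complex_eq_iff sin_theta cos_add sin_add field_simps sqrt2_sqrt2_mult)
qed

lemma sqrt2_cos_theta: "sqrt 2 * cos (theta k) = sqrt (1 + (cos k)\<^sup>2)"
proof -
  have "2 * (1 - (sin k / sqrt 2)\<^sup>2) = 1 + (cos k)\<^sup>2"
    using sin_cos_squared_add[of k] by (simp add: power_divide algebra_simps)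
  then show ?thesis unfolding cos_theta by (metis real_sqrt_mult)
qed

definition wfun :: "real \<Rightarrow> real \<Rightarrow> real" where
  "wfun w k = 1/2 + sin (k + w) / (2 * sqrt (1 + (cos k)\<^sup>2))"

lemma wP_formula: "wP (alpha0 \<omega>) (beta0 \<omega>) k = complex_of_real (wfun (\<omega> 0) k)"
proof -
  have r: "cos (theta k) > 0" by (rule cos_theta_pos)
  have "wP (alpha0 \<omega>) (beta0 \<omega>) k = complex_of_real ((sin (k + \<omega> 0) / sqrt 2 + cos (theta k)) / (2 * cos (theta k)))"
    unfolding wP_eq_overlap overlap_P_eq weight_numerator by simp
  also have "(sin (k + \<omega> 0) / sqrt 2 + cos (theta k)) / (2 * cos (theta k)) = wfun (\<omega> 0) k"
    unfolding wfun_def sqrt2_cos_theta[symmetric] using r by (simp add: field_simps)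
  finally show ?thesis .
qed

lemma norm_alpha_beta: "(cmod (alpha0 \<omega>))\<^sup>2 + (cmod (beta0 \<omega>))\<^sup>2 = 1"
  by (simp add: alpha0_def beta0_def norm_divide norm_mult power_divide)

lemma wQ_formula: "wQ (alpha0 \<omega>) (beta0 \<omega>) k = complex_of_real (1 - wfun (\<omega> 0) k)"
proof -
  have h: "(cmod (eigP1 (alpha0 \<omega>) (beta0 \<omega>) k))\<^sup>2 + (cmod (eigP2 (alpha0 \<omega>) (beta0 \<omega>) k))\<^sup>2 +
    ((cmod (eigQ1 (alpha0 \<omega>) (beta0 \<omega>) k))\<^sup>2 + (cmod (eigQ2 (alpha0 \<omega>) (beta0 \<omega>) k))\<^sup>2) = 1"
    using norm_sum_PQ[of "alpha0 \<omega>" "beta0 \<omega>" k] norm_alpha_beta[of \<omega>] by simp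
  have "wP (alpha0 \<omega>) (beta0 \<omega>) k + wQ (alpha0 \<omega>) (beta0 \<omega>) k = 1"
    unfolding wP_def wQ_def ip2_self of_real_add[symmetric] h by simp
  then show ?thesis unfolding wP_formula by (simp add: algebra_simps)
qed

lemma integral_flip: "integral {a..b} (\<lambda>k. f (a + b - k)) = integral {a..b::real} f"
proof -
  have "integral {a..b} (\<lambda>k. f (a + b - k)) = integral {a..b} ((\<lambda>y. f (- y)) \<circ> (+) (-(a+b)))"
    by (simp add: o_def algebra_simps)
  also have "\<dots> = integral {-b..-a} (\<lambda>y. f (- y))"
    unfolding integral_shift_Icc_real by (simp add: algebra_simps)
  also have "\<dots> = integral {a..b} f" by simp
  finally show ?thesis .
qed

lemma integral_flip2: "integral {0..c} (\<lambda>k. f (2*c - k)) = integral {c..2*c::real} f"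
proof -
  have "integral {0..c} (\<lambda>k. f (2*c - k)) = integral {0..c} ((\<lambda>y. f (- y)) \<circ> (+) (-(2*c)))"
    by (simp add: o_def algebra_simps)
  also have "\<dots> = integral {-(2*c)..-c} (\<lambda>y. f (- y))"
    unfolding integral_shift_Icc_real by (simp add: algebra_simps)
  also have "\<dots> = integral {c..2*c} f" by (rule Henstock_Kurzweil_Integration.integral_reflect_real)
  finally show ?thesis .
qed

lemma vel_2pi: "vel (2*pi - k) = vel k" and vel_pi: "vel (pi - k) = - vel k"
  by (simp_all add: vel_def)

text \<open>Pairing \<open>k\<close> with \<open>2\<pi> - k\<close> cancels the odd part of the weight.\<close>
lemma wfun_sum: "wfun w k + wfun w (2*pi - k) = 1 - sin w * vel k"
proof -
  have c: "cos (2*pi - k) = cos k" by (simp add: cos_diff)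
  have s: "sin (k + w) + sin (2*pi - k + w) = 2 * sin w * cos k"
    by (simp add: sin_add cos_add sin_diff cos_diff)
  have S: "sqrt (1 + (cos k)\<^sup>2) > 0" using zero_le_power2[of "cos k"] by (simp add: add_pos_nonneg)
  have "wfun w k + wfun w (2*pi - k) = 1 + (sin (k + w) + sin (2*pi - k + w)) / (2 * sqrt (1 + (cos k)\<^sup>2))"
    unfolding wfun_def c by (simp add: add_divide_distrib)
  also have "\<dots> = 1 - sin w * vel k" unfolding s vel_def using S by (simp add: field_simps)
  finally show ?thesis .
qed

lemma integrable_isCont: "(\<And>x. isCont f x) \<Longrightarrow> (f::real\<Rightarrow>complex) integrable_on {a..b}"
  by (rule integrable_continuous_interval) (auto intro!: continuous_at_imp_continuous_on)

lemma limit_integrand_int: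
  "integral {0..2*pi} (limit_integrand (alpha0 \<omega>) (beta0 \<omega>) t) =
     2 * integral {0..pi} (\<lambda>k. iexp (t * vel k) * complex_of_real (1 - sin (\<omega> 0) * vel k))"
proof -
  let ?f = "limit_integrand (alpha0 \<omega>) (beta0 \<omega>) t"
  let ?h = "\<lambda>k. iexp (t * vel k) * complex_of_real (1 - sin (\<omega> 0) * vel k)"
  have cf: "isCont ?f x" for x by (rule isCont_limit_integrand)
  have cf2: "isCont (\<lambda>k. ?f (2*pi - k)) x" for x
    by (rule isCont_o2[OF _ cf]) (intro continuous_intros)
  have ch: "isCont ?h x" for x by (intro continuous_intros isCont_vel)
  have ch2: "isCont (\<lambda>k. ?h (0 + pi - k)) x" for x
    by (rule isCont_o2[OF _ ch]) (intro continuous_intros)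
  have pt: "?f k + ?f (2*pi - k) = ?h k + ?h (0 + pi - k)" for k
  proof -
    have "?f k + ?f (2*pi - k) = iexp (t * vel k) * complex_of_real (wfun (\<omega> 0) k + wfun (\<omega> 0) (2*pi - k))
       + iexp (- (t * vel k)) * complex_of_real (2 - (wfun (\<omega> 0) k + wfun (\<omega> 0) (2*pi - k)))"
      unfolding limit_integrand_def wP_formula wQ_formula vel_2pi by (simp add: algebra_simps)
    also have "\<dots> = ?h k + ?h (0 + pi - k)"
      unfolding wfun_sum by (simp add: vel_pi algebra_simps)
    finally show ?thesis .
  qed
  have "integral {0..2*pi} ?f = integral {0..pi} ?f + integral {pi..2*pi} ?f"
    by (rule Henstock_Kurzweil_Integration.integral_combine[symmetric]) (auto intro!: integrable_isCont cf)
  also have "integral {pi..2*pi} ?f = integral {0..pi} (\<lambda>k. ?f (2*pi - k))"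
    by (rule integral_flip2[symmetric])
  also have "integral {0..pi} ?f + \<dots> = integral {0..pi} (\<lambda>k. ?f k + ?f (2*pi - k))"
    by (rule integral_add[symmetric]) (auto intro!: integrable_isCont cf cf2)
  also have "\<dots> = integral {0..pi} (\<lambda>k. ?h k + ?h (0 + pi - k))" unfolding pt ..
  also have "\<dots> = integral {0..pi} ?h + integral {0..pi} (\<lambda>k. ?h (0 + pi - k))"
    by (rule integral_add; rule integrable_isCont; rule ch ch2)
  also have "integral {0..pi} (\<lambda>k. ?h (0 + pi - k)) = integral {0..pi} ?h"
    by (rule integral_flip)
  finally show ?thesis by simp
qed

subsection \<open>The limit law as the image of a density under the group velocity\<close>

lemma one_plus_cos_sq_pos: "0 < 1 + (cos (k::real))\<^sup>2" using zero_le_power2[of "cos k"] by linarith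

text \<open>The derivative of the velocity; it is nonnegative on \<open>[0, \<pi>]\<close>, where the velocity
  increases from \<open>-1/\<surd>2\<close> to \<open>1/\<surd>2\<close>.\<close>
definition vel_deriv :: "real \<Rightarrow> real" where
  "vel_deriv k = sin k / ((1 + (cos k)\<^sup>2) * sqrt (1 + (cos k)\<^sup>2))"

lemma vel_deriv: "(vel has_real_derivative vel_deriv k) (at k)"
proof -
  let ?S = "sqrt (1 + (cos k)\<^sup>2)"
  have S: "?S > 0" using one_plus_cos_sq_pos[of k] by simp
  have d: "((\<lambda>k. sqrt (1 + (cos k)\<^sup>2)) has_real_derivative (inverse (?S) / 2 * (2 * cos k * - sin k))) (at k)"
    by (rule derivative_eq_intros refl | use one_plus_cos_sq_pos[of k] in simp)+
  have "(vel has_real_derivative ((- (- sin k) * ?S - (- cos k) * (inverse (?S) / 2 * (2 * cos k * - sin k))) / (?S * ?S))) (at k)"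
    unfolding vel_def[abs_def] using DERIV_divide[OF DERIV_minus[OF DERIV_cos] d] S by simp
  moreover have "((- (- sin k) * ?S - (- cos k) * (inverse (?S) / 2 * (2 * cos k * - sin k))) / (?S * ?S)) = vel_deriv k"
  proof -
    have SS: "?S * ?S = 1 + (cos k)\<^sup>2" using one_plus_cos_sq_pos[of k] by simp
    have "((- (- sin k) * ?S - (- cos k) * (inverse (?S) / 2 * (2 * cos k * - sin k))) / (?S * ?S))
        = sin k * (?S * ?S - (cos k)\<^sup>2) / (?S * (?S * ?S))"
      using S by (simp add: field_simps power2_eq_square)
    also have "\<dots> = vel_deriv k" unfolding SS vel_deriv_def by (simp add: mult.commute)
    finally show ?thesis .
  qed
  ultimately show ?thesis by simp
qed

lemma isCont_vel_deriv: "isCont vel_deriv k"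
proof -
  have "(1 + (cos k)\<^sup>2) * sqrt (1 + (cos k)\<^sup>2) \<noteq> 0" using one_plus_cos_sq_pos[of k] by simp
  then show ?thesis unfolding vel_deriv_def[abs_def] by (intro continuous_intros) auto
qed

lemma vel_deriv_nonneg: "k \<in> {0..pi} \<Longrightarrow> 0 \<le> vel_deriv k"
  unfolding vel_deriv_def using one_plus_cos_sq_pos[of k] by (auto intro!: divide_nonneg_pos sin_ge_zero)

lemma vel_0: "vel 0 = - 1 / sqrt 2" and vel_pi': "vel pi = 1 / sqrt 2"
  by (simp_all add: vel_def)

lemma vel_bound: "\<bar>vel k\<bar> \<le> 1 / sqrt 2"
proof -
  have S: "sqrt (1 + (cos k)\<^sup>2) > 0" using one_plus_cos_sq_pos[of k] by simp
  have "(cos k)\<^sup>2 * 2 \<le> 1 + (cos k)\<^sup>2" using abs_cos_le_one[of k] by (simp add: abs_square_le_1)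
  then have "\<bar>cos k\<bar> * sqrt 2 \<le> sqrt (1 + (cos k)\<^sup>2)"
    by (metis real_sqrt_abs real_sqrt_le_iff real_sqrt_mult)
  then show ?thesis unfolding vel_def using S by (simp add: abs_div field_simps)
qed

text \<open>Change of variables \<open>x = vel(k)\<close>: the Konno density times the Jacobian is constant.\<close>
lemma fK_vel:
  assumes k: "k \<in> {0<..<pi}"
  shows "f_K (vel k) * vel_deriv k = 1 / pi"
proof -
  let ?c = "cos k" and ?S = "sqrt (1 + (cos k)\<^sup>2)"
  have S: "?S > 0" and S2: "?S * ?S = 1 + ?c\<^sup>2" using one_plus_cos_sq_pos[of k] by simp_all
  have sk: "sin k > 0" using k by (auto intro!: sin_gt_zero)
  have h2: "(vel k)\<^sup>2 = ?c\<^sup>2 / (1 + ?c\<^sup>2)" unfolding vel_def using one_plus_cos_sq_pos[of k] by (simp add: power_divide)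
  have 1: "1 - (vel k)\<^sup>2 = 1 / (1 + ?c\<^sup>2)" unfolding h2 using one_plus_cos_sq_pos[of k] by (simp add: field_simps)
  have 2: "1 - 2 * (vel k)\<^sup>2 = (sin k)\<^sup>2 / (1 + ?c\<^sup>2)"
    unfolding h2 using one_plus_cos_sq_pos[of k] sin_cos_squared_add[of k] by (simp add: field_simps)
  have 3: "sqrt (1 - 2 * (vel k)\<^sup>2) = sin k / ?S"
    unfolding 2 real_sqrt_divide using sk by simp
  have pos: "0 < 1 - 2 * (vel k)\<^sup>2" unfolding 2 using sk one_plus_cos_sq_pos[of k] by simp
  have "\<bar>vel k\<bar> < 1 / sqrt 2"
  proof -
    have "(vel k)\<^sup>2 < 1/2" using pos by simp
    then have "sqrt ((vel k)\<^sup>2) < sqrt (1/2)" by (rule real_sqrt_less_mono)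
    then show ?thesis by (simp add: real_sqrt_divide)
  qed
  then have ind: "indicator {-1/sqrt 2<..<1/sqrt 2} (vel k) = (1::real)"
    by (simp add: abs_less_iff)
  have "f_K (vel k) = 1 / (pi * (1 / (1 + ?c\<^sup>2)) * (sin k / ?S))"
    unfolding f_K_def ind 3[symmetric] 1[symmetric] by (simp add: power2_eq_square)
  moreover have "0 < ?S * (1 + ?c\<^sup>2)" using S one_plus_cos_sq_pos[of k] by simp
  ultimately show ?thesis unfolding vel_deriv_def using S sk S2 by (simp add: field_simps)
qed

definition kdens :: "real \<Rightarrow> real \<Rightarrow> real" where
  "kdens w k = indicator {0..pi} k * (1 - sin w * vel k) / pi"
definition Kmeas :: "real \<Rightarrow> real measure" where
  "Kmeas w = density lborel (\<lambda>k. ennreal (kdens w k))"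
definition Wdens :: "real \<Rightarrow> real \<Rightarrow> real" where
  "Wdens w = (\<lambda>x. (1 - sin w * x) * f_K x)"
definition Wmeas :: "real \<Rightarrow> real measure" where
  "Wmeas w = density lborel (\<lambda>x. ennreal (Wdens w x))"

lemma one_minus_pos: "\<bar>x\<bar> \<le> 1 / sqrt 2 \<Longrightarrow> 0 < 1 - sin w * x"
proof -
  assume x: "\<bar>x\<bar> \<le> 1 / sqrt 2"
  have "1 / sqrt 2 < (1::real)" by (simp add: divide_less_eq)
  have "\<bar>sin w\<bar> * \<bar>x\<bar> \<le> 1 * (1 / sqrt 2)" by (rule mult_mono) (use x in auto)
  then have "\<bar>sin w * x\<bar> < 1" unfolding abs_mult using \<open>1 / sqrt 2 < 1\<close> by linarith
  then show ?thesis by (simp add: abs_less_iff)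
qed

lemma kdens_nonneg: "0 \<le> kdens w k"
  unfolding kdens_def using one_minus_pos[OF vel_bound[of k], of w] by (simp add: indicator_def)

lemma vel_measurable[measurable]: "vel \<in> borel_measurable borel"
  by (intro borel_measurable_continuous_onI continuous_at_imp_continuous_on ballI isCont_vel)

lemma kdens_measurable[measurable]: "kdens w \<in> borel_measurable borel"
  unfolding kdens_def[abs_def] by measurable

lemma fK_nonneg: "0 \<le> f_K x"
proof (cases "x \<in> {-1/sqrt 2<..<1/sqrt 2}")
  case True
  then have "\<bar>x\<bar> < 1 / sqrt 2" by auto
  then have "\<bar>x\<bar>\<^sup>2 < (1 / sqrt 2)\<^sup>2" by (intro power_strict_mono) auto
  then have "x\<^sup>2 < 1/2" by (simp add: power_divide)
  then have "0 < 1 - x\<^sup>2" "0 < 1 - 2 * x\<^sup>2" by auto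
  then show ?thesis unfolding f_K_def using True by simp
next
  case False then show ?thesis unfolding f_K_def by simp
qed

lemma Wdens_nonneg: "0 \<le> Wdens w x"
proof (cases "x \<in> {-1/sqrt 2<..<1/sqrt 2}")
  case True
  then have "\<bar>x\<bar> \<le> 1 / sqrt 2" by auto
  then show ?thesis unfolding Wdens_def using one_minus_pos[of x w] fK_nonneg[of x] by simp
next
  case False then show ?thesis unfolding Wdens_def f_K_def by simp
qed

lemma Wdens_zero: "x \<notin> {-1/sqrt 2<..<1/sqrt 2} \<Longrightarrow> Wdens w x = 0"
  unfolding Wdens_def f_K_def by simp

lemma Wdens_measurable[measurable]: "Wdens w \<in> borel_measurable borel"
  unfolding Wdens_def f_K_def by measurable

text \<open>The velocity is odd about \<open>\<pi>/2\<close>, so it integrates to zero over \<open>[0, \<pi>]\<close>.\<close>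
lemma integral_vel_0: "integral {0..pi} vel = 0"
proof -
  have "integral {0..pi} (\<lambda>k. vel (0 + pi - k)) = integral {0..pi} vel" by (rule integral_flip)
  moreover have "integral {0..pi} (\<lambda>k. vel (0 + pi - k)) = - integral {0..pi} vel"
    by (simp add: vel_pi)
  ultimately show ?thesis by simp
qed

lemma kdens_has_integral: "(kdens w has_integral 1) UNIV"
proof -
  have i: "vel integrable_on {0..pi}"
    by (rule integrable_continuous_interval) (auto intro!: continuous_at_imp_continuous_on isCont_vel)
  have "((\<lambda>k. (1 - sin w * vel k) / pi) has_integral ((pi - 0) - sin w * integral {0..pi} vel) / pi) {0..pi}"
    by (intro has_integral_divide has_integral_diff has_integral_mult_right integrable_integral i)
       (use has_integral_const_real[of "1::real" 0 pi] in simp)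
  then have "((\<lambda>k. (1 - sin w * vel k) / pi) has_integral 1) {0..pi}" by (simp add: integral_vel_0)
  then have "((\<lambda>k. if k \<in> {0..pi} then (1 - sin w * vel k) / pi else 0) has_integral 1) UNIV"
    by (simp only: has_integral_restrict_UNIV)
  moreover have "(\<lambda>k. if k \<in> {0..pi} then (1 - sin w * vel k) / pi else 0) = kdens w"
    by (auto simp: kdens_def)
  ultimately show ?thesis by simp
qed

lemma prob_Kmeas: "prob_space (Kmeas w)"
proof
  have "emeasure (Kmeas w) (space (Kmeas w)) = (\<integral>\<^sup>+x. ennreal (kdens w x) \<partial>lborel)"
    unfolding Kmeas_def by (simp add: emeasure_density)
  also have "\<dots> = ennreal 1"
    by (rule nn_integral_has_integral_lborel) (auto simp: kdens_nonneg kdens_has_integral)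
  finally show "emeasure (Kmeas w) (space (Kmeas w)) = 1" by simp
qed

lemma emeasure_Wmeas_substitution:
  assumes A[measurable]: "A \<in> sets borel"
  shows "emeasure (Wmeas w) A =
    (\<integral>\<^sup>+k. ennreal (Wdens w (vel k) * indicator A (vel k) * vel_deriv k * indicator {0..pi} k) \<partial>lborel)"
proof -
  have "emeasure (Wmeas w) A = (\<integral>\<^sup>+x. ennreal (Wdens w x) * indicator A x \<partial>lborel)"
    unfolding Wmeas_def by (rule emeasure_density) auto
  also have "\<dots> = (\<integral>\<^sup>+x. ennreal (Wdens w x * indicator A x * indicator {vel 0..vel pi} x) \<partial>lborel)"
  proof (rule nn_integral_cong)
    fix x
    show "ennreal (Wdens w x) * indicator A x = ennreal (Wdens w x * indicator A x * indicator {vel 0..vel pi} x)"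
    proof (cases "x \<in> {-1/sqrt 2<..<1/sqrt 2}")
      case True
      then have "x \<in> {vel 0..vel pi}" by (auto simp: vel_0 vel_pi')
      then show ?thesis by (simp add: indicator_def)
    qed (simp add: Wdens_zero)
  qed
  also have "\<dots> = (\<integral>\<^sup>+k. ennreal (Wdens w (vel k) * indicator A (vel k) * vel_deriv k * indicator {0..pi} k) \<partial>lborel)"
    by (rule nn_integral_substitution[where f="\<lambda>x. Wdens w x * indicator A x"])
       (auto simp: set_borel_measurable_def vel_deriv vel_deriv_nonneg
             intro!: continuous_at_imp_continuous_on isCont_vel_deriv)
  finally show ?thesis .
qed

lemma substituted_density:
  assumes "k \<noteq> 0" "k \<noteq> pi"
  shows "Wdens w (vel k) * indicator A (vel k) * vel_deriv k * indicator {0..pi} k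
         = kdens w k * indicator (vel -` A) k"
proof (cases "k \<in> {0..pi}")
  case True
  then have k: "k \<in> {0<..<pi}" using assms by auto
  have "Wdens w (vel k) * vel_deriv k = (1 - sin w * vel k) / pi"
    unfolding Wdens_def using fK_vel[OF k] by (simp add: field_simps)
  then show ?thesis using True by (simp add: kdens_def indicator_def)
qed (simp add: kdens_def)

lemma Wmeas_distr: "Wmeas w = distr (Kmeas w) borel vel"
proof (rule measure_eqI)
  show "sets (Wmeas w) = sets (distr (Kmeas w) borel vel)" by (simp add: Wmeas_def)
  fix A assume "A \<in> sets (Wmeas w)"
  then have A[measurable]: "A \<in> sets borel" by (simp add: Wmeas_def)
  have "AE k in lborel. k \<noteq> 0 \<and> k \<noteq> pi"
    using AE_lborel_singleton[of 0] AE_lborel_singleton[of pi] by eventually_elim auto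
  then have "AE k in lborel.
      ennreal (Wdens w (vel k) * indicator A (vel k) * vel_deriv k * indicator {0..pi} k)
      = ennreal (kdens w k) * indicator (vel -` A) k"
  proof eventually_elim
    case (elim k)
    have "ennreal (kdens w k) * indicator (vel -` A) k = ennreal (kdens w k * indicator (vel -` A) k)"
      by (simp add: indicator_def)
    moreover have "Wdens w (vel k) * indicator A (vel k) * vel_deriv k * indicator {0..pi} k
                   = kdens w k * indicator (vel -` A) k"
      using elim by (intro substituted_density) auto
    ultimately show ?case by simp
  qed
  then have "emeasure (Wmeas w) A = (\<integral>\<^sup>+k. ennreal (kdens w k) * indicator (vel -` A) k \<partial>lborel)"
    unfolding emeasure_Wmeas_substitution[OF A] by (rule nn_integral_cong_AE)
  also have "\<dots> = emeasure (Kmeas w) (vel -` A)"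
    unfolding Kmeas_def using measurable_sets[OF vel_measurable A] by (intro emeasure_density[symmetric]) auto
  also have "\<dots> = emeasure (distr (Kmeas w) borel vel) A"
    by (subst emeasure_distr) (auto simp: Kmeas_def)
  finally show "emeasure (Wmeas w) A = emeasure (distr (Kmeas w) borel vel) A" .
qed

lemma real_distribution_Wmeas: "real_distribution (Wmeas w)"
proof -
  interpret N: prob_space "Kmeas w" by (rule prob_Kmeas)
  have "prob_space (distr (Kmeas w) borel vel)" by (rule N.prob_space_distr) (simp add: Kmeas_def)
  then show ?thesis unfolding real_distribution_def real_distribution_axioms_def Wmeas_distr by simp
qed

lemma char_Wmeas:
  "char (Wmeas w) t = (1/pi) *\<^sub>R integral {0..pi} (\<lambda>k. iexp (t * vel k) * complex_of_real (1 - sin w * vel k))"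
proof -
  let ?h = "\<lambda>k. iexp (t * vel k) * complex_of_real (1 - sin w * vel k)"
  have ch: "continuous_on {0..pi} (\<lambda>k. (1/pi) *\<^sub>R ?h k)"
    by (auto intro!: continuous_at_imp_continuous_on continuous_intros isCont_vel)
  have "char (Wmeas w) t = (CLINT k|Kmeas w. iexp (t * vel k))"
    unfolding char_def Wmeas_distr by (subst integral_distr) (auto simp: Kmeas_def)
  also have "\<dots> = (CLINT k|lborel. kdens w k *\<^sub>R iexp (t * vel k))"
    unfolding Kmeas_def by (rule integral_density) (auto simp: kdens_nonneg)
  also have "\<dots> = (CLINT k|lborel. indicator {0..pi} k *\<^sub>R ((1/pi) *\<^sub>R ?h k))"
    by (rule Bochner_Integration.integral_cong) (auto simp: kdens_def indicator_def scaleR_conv_of_real)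
  also have "\<dots> = set_lebesgue_integral lborel {0..pi} (\<lambda>k. (1/pi) *\<^sub>R ?h k)"
    by (simp only: set_lebesgue_integral_def)
  also have "\<dots> = integral {0..pi} (\<lambda>k. (1/pi) *\<^sub>R ?h k)"
    by (rule set_borel_integral_eq_integral(2)) (rule borel_integrable_atLeastAtMost'[OF ch])
  also have "\<dots> = (1/pi) *\<^sub>R integral {0..pi} ?h" by (rule integral_cmul)
  finally show ?thesis .
qed

lemma measure_Wmeas_Icc: "measure (Wmeas w) {u..v} = integral {u..v} (Wdens w)"
proof -
  interpret M: real_distribution "Wmeas w" by (rule real_distribution_Wmeas)
  let ?f = "\<lambda>x. Wdens w x * indicator {u..v} x"
  have "ennreal (measure (Wmeas w) {u..v}) = emeasure (Wmeas w) {u..v}"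
    by (rule M.emeasure_eq_measure[symmetric])
  also have "\<dots> = (\<integral>\<^sup>+x. ennreal (Wdens w x) * indicator {u..v} x \<partial>lborel)"
    unfolding Wmeas_def by (rule emeasure_density) auto
  also have "\<dots> = (\<integral>\<^sup>+x. ennreal (?f x) \<partial>lborel)"
    by (rule nn_integral_cong) (simp add: indicator_def)
  finally have e: "(\<integral>\<^sup>+x. ennreal (?f x) \<partial>lborel) = ennreal (measure (Wmeas w) {u..v})" by simp
  have "(?f has_integral measure (Wmeas w) {u..v}) UNIV"
    by (rule nn_integral_has_integral) (auto simp: e Wdens_nonneg)
  moreover have "?f = (\<lambda>x. if x \<in> {u..v} then Wdens w x else 0)" by (auto simp: indicator_def)
  ultimately have "(Wdens w has_integral measure (Wmeas w) {u..v}) {u..v}"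
    by (simp only: has_integral_restrict_UNIV)
  then show ?thesis by (rule integral_unique[symmetric])
qed

text \<open>The limit law has no atoms, so closed intervals are continuity sets.\<close>
lemma Wmeas_frontier: "emeasure (Wmeas w) (frontier {u..v}) = 0"
proof -
  have f: "frontier {u..v} \<subseteq> {u, v}"
    unfolding frontier_def closure_closed[OF closed_atLeastAtMost] by auto
  have "emeasure (Wmeas w) {u, v} = (\<integral>\<^sup>+x. ennreal (Wdens w x) * indicator {u, v} x \<partial>lborel)"
    unfolding Wmeas_def by (rule emeasure_density) auto
  also have "\<dots> = 0"
  proof -
    have "AE x in lborel. ennreal (Wdens w x) * indicator {u, v} x = 0"
      using AE_lborel_singleton[of u] AE_lborel_singleton[of v] by eventually_elim auto
    from nn_integral_cong_AE[OF this] show ?thesis by simp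
  qed
  finally have "emeasure (Wmeas w) {u, v} = 0" by simp
  moreover have "emeasure (Wmeas w) (frontier {u..v}) \<le> emeasure (Wmeas w) {u, v}"
    by (rule emeasure_mono[OF f]) (simp add: Wmeas_def)
  ultimately show ?thesis by simp
qed

subsection \<open>The quenched law and its characteristic function\<close>

lemma qw_prob_nonneg: "0 \<le> qw_prob \<omega> n x"
  unfolding qw_prob_def by simp

lemma qw_prob_zero: "x \<notin> {- int n..int n} \<Longrightarrow> qw_prob \<omega> n x = 0"
  unfolding qw_prob_def by auto

lemma char_integrand_has_integral:
  "(char_integrand al be n t has_integral
     (2 * pi * (\<Sum>x\<in>{-int n..int n}. complex_of_real ((cmod (fst (hadamard al be n x)))\<^sup>2 + (cmod (snd (hadamard al be n x)))\<^sup>2)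
        * iexp (t / real n * of_int x)))) {0..2*pi}"
proof -
  have "((\<lambda>k. char_integrand al be n t k) has_integral
     (2 * pi * (\<Sum>x\<in>{-int n..int n}. cnj (fst (hadamard al be n x)) * fst (hadamard al be n x) * iexp (t / real n * of_int x)) +
      2 * pi * (\<Sum>x\<in>{-int n..int n}. cnj (snd (hadamard al be n x)) * snd (hadamard al be n x) * iexp (t / real n * of_int x)))) {0..2*pi}"
    unfolding char_integrand_def hatA_def hatB_def by (intro has_integral_add parseval)
  moreover have "cnj z * z = complex_of_real ((cmod z)\<^sup>2)" for z
    by (subst complex_norm_square) (rule mult.commute)
  ultimately show ?thesis
    by (simp add: distrib_left[symmetric] sum.distrib[symmetric] distrib_right of_real_add)
qed

text \<open>At \<open>t = 0\<close> the integrand is \<open>|P(k)|\<^sup>2 + |Q(k)|\<^sup>2 = 1\<close>.\<close>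
lemma char_integrand_zero_t: "char_integrand (alpha0 \<omega>) (beta0 \<omega>) n 0 k = 1"
proof -
  have "char_integrand (alpha0 \<omega>) (beta0 \<omega>) n 0 k = wP (alpha0 \<omega>) (beta0 \<omega>) k + wQ (alpha0 \<omega>) (beta0 \<omega>) k"
    unfolding char_integrand_expand by (simp add: ortho ortho' wP_def wQ_def)
  also have "\<dots> = 1" by (simp add: wP_formula wQ_formula flip: of_real_add)
  finally show ?thesis .
qed

text \<open>The quenched law is a probability distribution (Parseval at \<open>t = 0\<close>).\<close>
lemma total_prob: "(\<Sum>x\<in>{- int n..int n}. qw_prob \<omega> n x) = 1"
proof -
  have "(char_integrand (alpha0 \<omega>) (beta0 \<omega>) n 0 has_integral
     (2 * pi * (\<Sum>x\<in>{-int n..int n}. complex_of_real (qw_prob \<omega> n x)))) {0..2*pi}"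
    using char_integrand_has_integral[of "alpha0 \<omega>" "beta0 \<omega>" n 0] by (simp add: qw_prob_hadamard)
  moreover have "(char_integrand (alpha0 \<omega>) (beta0 \<omega>) n 0 has_integral (2 * pi)) {0..2*pi}"
    unfolding char_integrand_zero_t using has_integral_const_real[of "1::complex" 0 "2*pi"] by (simp add: scaleR_conv_of_real)
  ultimately have "2 * pi * (\<Sum>x\<in>{-int n..int n}. complex_of_real (qw_prob \<omega> n x)) = 2 * pi"
    using has_integral_unique by blast
  then have "complex_of_real (\<Sum>x\<in>{-int n..int n}. qw_prob \<omega> n x) = 1" by simp
  then show ?thesis by (simp only: of_real_eq_1_iff)
qed

definition walk_pmf :: "(int \<Rightarrow> real) \<Rightarrow> nat \<Rightarrow> int pmf" where
  "walk_pmf \<omega> n = embed_pmf (qw_prob \<omega> n)"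

lemma pmf_walk_pmf: "pmf (walk_pmf \<omega> n) x = qw_prob \<omega> n x"
  unfolding walk_pmf_def
proof (rule pmf_embed_pmf)
  show "0 \<le> qw_prob \<omega> n x" for x by (rule qw_prob_nonneg)
  have "(\<integral>\<^sup>+x. ennreal (qw_prob \<omega> n x) \<partial>count_space UNIV) = (\<Sum>x\<in>{- int n..int n}. ennreal (qw_prob \<omega> n x))"
    by (rule nn_integral_count_space') (auto simp: qw_prob_zero)
  also have "\<dots> = 1" by (simp add: qw_prob_nonneg total_prob)
  finally show "(\<integral>\<^sup>+x. ennreal (qw_prob \<omega> n x) \<partial>count_space UNIV) = 1" .
qed

lemma set_walk_pmf: "set_pmf (walk_pmf \<omega> n) \<subseteq> {- int n..int n}"
proof
  fix x assume "x \<in> set_pmf (walk_pmf \<omega> n)"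
  then have "qw_prob \<omega> n x \<noteq> 0" by (simp add: set_pmf_iff pmf_walk_pmf)
  then show "x \<in> {- int n..int n}" using qw_prob_zero by blast
qed

definition scaled_law :: "(int \<Rightarrow> real) \<Rightarrow> nat \<Rightarrow> real measure" where
  "scaled_law \<omega> n = distr (measure_pmf (walk_pmf \<omega> n)) borel (\<lambda>x. real_of_int x / real n)"

lemma real_distribution_scaled_law: "real_distribution (scaled_law \<omega> n)"
proof -
  have "prob_space (scaled_law \<omega> n)" unfolding scaled_law_def
    by (rule measure_pmf.prob_space_distr) simp
  then show ?thesis unfolding real_distribution_def real_distribution_axioms_def by (simp add: scaled_law_def)
qed

lemma char_scaled_law: "char (scaled_law \<omega> n) t = (\<Sum>x\<in>{- int n..int n}. complex_of_real (qw_prob \<omega> n x) * iexp (t / real n * of_int x))"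
proof -
  have "char (scaled_law \<omega> n) t = (CLINT x|measure_pmf (walk_pmf \<omega> n). iexp (t * (real_of_int x / real n)))"
    unfolding char_def scaled_law_def by (subst integral_distr) auto
  also have "\<dots> = (\<Sum>x\<in>{- int n..int n}. pmf (walk_pmf \<omega> n) x *\<^sub>R iexp (t * (real_of_int x / real n)))"
    by (rule integral_measure_pmf) (use set_walk_pmf[of \<omega> n] in blast)+
  also have "\<dots> = (\<Sum>x\<in>{- int n..int n}. complex_of_real (qw_prob \<omega> n x) * iexp (t / real n * of_int x))"
    by (rule sum.cong) (simp_all add: pmf_walk_pmf scaleR_conv_of_real)
  finally show ?thesis .
qed

lemma char_scaled_law_conv: "(\<lambda>n. char (scaled_law \<omega> n) t) \<longlonglongrightarrow> char (Wmeas (\<omega> 0)) t"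
proof -
  let ?a = "alpha0 \<omega>" and ?b = "beta0 \<omega>"
  have e: "char (scaled_law \<omega> n) t = (1 / (2 * pi)) *\<^sub>R integral {0..2*pi} (char_integrand ?a ?b n t)" for n
  proof -
    have "integral {0..2*pi} (char_integrand ?a ?b n t) = 2 * pi * char (scaled_law \<omega> n) t"
      unfolding char_scaled_law using char_integrand_has_integral[of ?a ?b n t] by (simp add: qw_prob_hadamard integral_unique)
    then show ?thesis by (simp add: scaleR_conv_of_real)
  qed
  have "(\<lambda>n. (1 / (2 * pi)) *\<^sub>R integral {0..2*pi} (char_integrand ?a ?b n t)) \<longlonglongrightarrow> (1 / (2 * pi)) *\<^sub>R integral {0..2*pi} (limit_integrand ?a ?b t)"
    by (intro tendsto_scaleR tendsto_const char_integrand_conv norm_alpha_beta)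
  moreover have "(1 / (2 * pi)) *\<^sub>R integral {0..2*pi} (limit_integrand ?a ?b t) = char (Wmeas (\<omega> 0)) t"
    unfolding limit_integrand_int char_Wmeas by (simp add: scaleR_conv_of_real)
  ultimately show ?thesis unfolding e by simp
qed

lemma measure_scaled_law: "0 < n \<Longrightarrow> measure (scaled_law \<omega> n) {u..v} = qw_interval_prob \<omega> n u v"
proof -
  assume n: "0 < n"
  let ?B = "(\<lambda>x. real_of_int x / real n) -` {u..v}"
  have "measure (scaled_law \<omega> n) {u..v} = measure (measure_pmf (walk_pmf \<omega> n)) ?B"
    unfolding scaled_law_def by (subst measure_distr) auto
  also have "\<dots> = measure (measure_pmf (walk_pmf \<omega> n)) (?B \<inter> set_pmf (walk_pmf \<omega> n))"
    by (rule measure_Int_set_pmf[symmetric])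
  also have "?B \<inter> set_pmf (walk_pmf \<omega> n) = (?B \<inter> {- int n..int n}) \<inter> set_pmf (walk_pmf \<omega> n)"
    using set_walk_pmf by blast
  also have "measure (measure_pmf (walk_pmf \<omega> n)) \<dots> = measure (measure_pmf (walk_pmf \<omega> n)) (?B \<inter> {- int n..int n})"
    by (rule measure_Int_set_pmf)
  also have "\<dots> = sum (pmf (walk_pmf \<omega> n)) (?B \<inter> {- int n..int n})"
    by (rule measure_measure_pmf_finite) simp
  also have "?B \<inter> {- int n..int n} = {x\<in>{- int n..int n}. u \<le> real_of_int x / real n \<and> real_of_int x / real n \<le> v}"
    by auto
  also have "sum (pmf (walk_pmf \<omega> n)) \<dots> = qw_interval_prob \<omega> n u v"
    unfolding qw_interval_prob_def by (simp add: pmf_walk_pmf)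
  finally show ?thesis .
qed

theorem theorem2:
  fixes \<omega> :: "int \<Rightarrow> real" and u v :: real
  assumes "u \<le> v"
  shows "(\<lambda>n. qw_interval_prob \<omega> n u v) \<longlonglongrightarrow>
           integral {u..v} (\<lambda>x. (1 - sin (\<omega> 0) * x) * f_K x)"
proof -
  have wc: "weak_conv_m (scaled_law \<omega>) (Wmeas (\<omega> 0))"
    by (rule levy_continuity) (auto intro: real_distribution_scaled_law real_distribution_Wmeas char_scaled_law_conv)
  have "(\<lambda>n. measure (scaled_law \<omega> n) {u..v}) \<longlonglongrightarrow> measure (Wmeas (\<omega> 0)) {u..v}"
    by (rule weak_conv_imp_continuity_set_conv[OF real_distribution_scaled_law real_distribution_Wmeas wc])
       (auto simp: Wmeas_frontier)
  then have "(\<lambda>n. measure (scaled_law \<omega> n) {u..v}) \<longlonglongrightarrow> integral {u..v} (\<lambda>x. (1 - sin (\<omega> 0) * x) * f_K x)"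
    unfolding measure_Wmeas_Icc Wdens_def .
  moreover have "eventually (\<lambda>n. measure (scaled_law \<omega> n) {u..v} = qw_interval_prob \<omega> n u v) sequentially"
    by (rule eventually_sequentiallyI[of 1]) (simp add: measure_scaled_law)
  ultimately show ?thesis by (rule Lim_transform_eventually)
qed

end
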